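(* For all positive integers $n,k$, the groups $\mathbb{Z}_{2n}\mathbin{\mathrm{wr}}\mathbb{Z}^k$ and $\mathbb{Z}_{3n}\mathbin{\mathrm{wr}}\mathbb{Z}^{2k+1}$ have the $R_\infty$-property.
   Context: $\mathbb{Z}_m\mathbin{\mathrm{wr}}\mathbb{Z}^k=\bigoplus_{x\in\mathbb{Z}^k}(\mathbb{Z}_m)_x\rtimes\mathbb{Z}^k$ is the restricted wreath product, with $\mathbb{Z}^k$ acting by shifting indices. For an automorphism $\varphi$ of a group $G$, elements $g_1,g_2$ are $\varphi$-twisted conjugate if $g_1=hg_2\varphi(h^{-1})$ for some $h\in G$; the number $R(\varphi)$ of these classes is the Reidemeister number. A group has the $R_\infty$-property if $R(\varphi)=\infty$ for every automorphism $\varphi$. *)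

theory Defs
  imports "HOL-Algebra.Group" "HOL-Algebra.Coset"
begin

text \<open>Restricted wreath product Z_m wr Z^k = (\<Oplus>_{x \<in> Z^k} Z_m) \<rtimes> Z^k.
  Points of Z^k are integer lists of length k.
  Z^k acts on the base by shifting indices: (v \<cdot> g)(x) = g(x - v).\<close>

definition vadd :: "int list \<Rightarrow> int list \<Rightarrow> int list" where
  "vadd v w = map2 (+) v w"

definition vsub :: "int list \<Rightarrow> int list \<Rightarrow> int list" where
  "vsub v w = map2 (-) v w"

definition wr_carrier :: "nat \<Rightarrow> nat \<Rightarrow> ((int list \<Rightarrow> int) \<times> int list) set" where
  "wr_carrier m k = {(f, v). length v = k
      \<and> (\<forall>x. 0 \<le> f x \<and> f x < int m)
      \<and> (\<forall>x. length x \<noteq> k \<longrightarrow> f x = 0)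
      \<and> finite {x. f x \<noteq> 0}}"

definition wr_mult :: "nat \<Rightarrow> nat \<Rightarrow> ((int list \<Rightarrow> int) \<times> int list) \<Rightarrow> ((int list \<Rightarrow> int) \<times> int list)
    \<Rightarrow> ((int list \<Rightarrow> int) \<times> int list)" where
  "wr_mult m k a b =
     ((\<lambda>x. if length x = k then (fst a x + fst b (vsub x (snd a))) mod int m else 0),
      vadd (snd a) (snd b))"

definition wreath :: "nat \<Rightarrow> nat \<Rightarrow> ((int list \<Rightarrow> int) \<times> int list) monoid" where
  "wreath m k = \<lparr>carrier = wr_carrier m k, mult = wr_mult m k,
                 one = (\<lambda>x. 0, replicate k 0)\<rparr>"

definition twisted_conj :: "('a, 'b) monoid_scheme \<Rightarrow> ('a \<Rightarrow> 'a) \<Rightarrow> 'a \<Rightarrow> 'a \<Rightarrow> bool" where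
  "twisted_conj G \<phi> g1 g2 \<longleftrightarrow>
     (\<exists>h \<in> carrier G. g1 = h \<otimes>\<^bsub>G\<^esub> g2 \<otimes>\<^bsub>G\<^esub> \<phi> (inv\<^bsub>G\<^esub> h))"

definition reidemeister_classes :: "('a, 'b) monoid_scheme \<Rightarrow> ('a \<Rightarrow> 'a) \<Rightarrow> 'a set set" where
  "reidemeister_classes G \<phi> =
     carrier G // {(g1, g2). g1 \<in> carrier G \<and> g2 \<in> carrier G \<and> twisted_conj G \<phi> g1 g2}"

definition R_infinity :: "('a, 'b) monoid_scheme \<Rightarrow> bool" where
  "R_infinity G \<longleftrightarrow> (\<forall>\<phi> \<in> iso G G. infinite (reidemeister_classes G \<phi>))"

end

theory Submission
  imports Defs "Jordan_Normal_Form.Char_Poly" "HOL-Library.List_Lexorder"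
begin

(* An automorphism phi of G = Z_m wr Z^k preserves the base group B of finitely supported
   functions Z^k -> Z_m (its elements are exactly those whose m-th power is trivial) and induces
   an automorphism mu of Z^k.

   If det (1 - mu) = 0, a nonzero linear form r vanishes on the image of 1 - mu, and r v is an
   invariant of the twisted class of (0, v).

   Otherwise fix a prime p dividing m.  Modulo p, phi acts on B as f |-> u0 * mu_*(f); as phi is
   invertible, u0 is a unit of F_p[Z^k], hence a monomial eps delta_w0 (compare leading terms in
   the lexicographic order).  So modulo p, phi moves the coefficient at x to Aff x = mu x + w0 and
   multiplies it by eps.  Since mu has no nonzero fixed point, twisted conjugacy inside B is by
   elements of B, and for every chi with chi o Aff = eps^-1 chi the sum of chi(y) f(y) is invariant
   modulo p.  For p = 2 we have eps = 1 and take chi the indicator of an Aff-orbit; for p = 3 and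
   eps = -1 we take the alternating indicator, which exists on orbits without odd period, and k
   odd provides those (a real matrix of odd size with M^N = 1, N odd, has eigenvalue 1).  The
   content of Aff x - x is an orbit invariant, which yields infinitely many such orbits. *)

section \<open>Integer vectors as lists\<close>

abbreviation vzero :: "nat \<Rightarrow> int list" where "vzero k \<equiv> replicate k 0"
abbreviation Zvec :: "nat \<Rightarrow> int list set" where "Zvec k \<equiv> {x. length x = k}"

definition vneg :: "int list \<Rightarrow> int list" where "vneg v = map uminus v"
definition vsmul :: "int \<Rightarrow> int list \<Rightarrow> int list" where "vsmul c v = map ((*) c) v"
definition vbasis :: "nat \<Rightarrow> nat \<Rightarrow> int list" where "vbasis k j = (vzero k)[j := 1]"
definition vdot :: "int list \<Rightarrow> int list \<Rightarrow> int" where "vdot r v = (\<Sum>i<length r. r ! i * v ! i)"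
definition vcontent :: "int list \<Rightarrow> int" where "vcontent y = Gcd (set y)"

lemma length_vadd [simp]: "length (vadd v w) = min (length v) (length w)"
  by (simp add: vadd_def)
lemma length_vsub [simp]: "length (vsub v w) = min (length v) (length w)"
  by (simp add: vsub_def)
lemma length_vneg [simp]: "length (vneg v) = length v"
  by (simp add: vneg_def)
lemma length_vsmul [simp]: "length (vsmul c v) = length v"
  by (simp add: vsmul_def)
lemma length_vbasis [simp]: "length (vbasis k j) = k"
  by (simp add: vbasis_def)

lemma nth_vadd [simp]: "i < length v \<Longrightarrow> i < length w \<Longrightarrow> vadd v w ! i = v ! i + w ! i"
  by (simp add: vadd_def)
lemma nth_vsub [simp]: "i < length v \<Longrightarrow> i < length w \<Longrightarrow> vsub v w ! i = v ! i - w ! i"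
  by (simp add: vsub_def)
lemma nth_vneg [simp]: "i < length v \<Longrightarrow> vneg v ! i = - (v ! i)"
  by (simp add: vneg_def)
lemma nth_vsmul [simp]: "i < length v \<Longrightarrow> vsmul c v ! i = c * (v ! i)"
  by (simp add: vsmul_def)
lemma nth_vbasis: "l < k \<Longrightarrow> vbasis k j ! l = (if l = j then 1 else 0)"
  by (simp add: vbasis_def nth_list_update)

lemma vadd_Cons [simp]: "vadd (x # xs) (y # ys) = (x + y) # vadd xs ys"
  by (simp add: vadd_def)
lemma vadd_Nil [simp]: "vadd [] ys = []" "vadd xs [] = []"
  by (simp_all add: vadd_def)

lemma vadd_commute: "vadd v w = vadd w v"
  by (rule nth_equalityI) (auto simp: vadd_def)
lemma vadd_assoc:
  "length u = length v \<Longrightarrow> length v = length w \<Longrightarrow> vadd (vadd u v) w = vadd u (vadd v w)"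
  by (rule nth_equalityI) auto
lemma vadd_vzero_right [simp]: "length v = k \<Longrightarrow> vadd v (vzero k) = v"
  by (rule nth_equalityI) auto
lemma vadd_vzero_left [simp]: "length v = k \<Longrightarrow> vadd (vzero k) v = v"
  by (metis vadd_commute vadd_vzero_right)
lemma vsub_vzero [simp]: "length v = k \<Longrightarrow> vsub v (vzero k) = v"
  by (rule nth_equalityI) auto
lemma vsub_self [simp]: "vsub v v = vzero (length v)"
  by (rule nth_equalityI) auto
lemma vsub_vadd_cancel [simp]: "length x = length v \<Longrightarrow> vsub (vadd x v) v = x"
  by (rule nth_equalityI) auto
lemma vadd_vsub_cancel [simp]: "length x = length v \<Longrightarrow> vadd (vsub x v) v = x"
  by (rule nth_equalityI) auto
lemma vsub_vsub:
  "length x = length v \<Longrightarrow> length v = length w \<Longrightarrow> vsub (vsub x v) w = vsub x (vadd v w)"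
  by (rule nth_equalityI) auto
lemma vadd_vneg_left [simp]: "vadd (vneg v) v = vzero (length v)"
  by (rule nth_equalityI) auto
lemma vsub_eq_vzero_iff: "length x = length y \<Longrightarrow> vsub x y = vzero (length x) \<longleftrightarrow> x = y"
  by (auto simp: list_eq_iff_nth_eq)
lemma vsmul_0 [simp]: "vsmul 0 v = vzero (length v)"
  by (rule nth_equalityI) auto
lemma vsmul_vzero [simp]: "vsmul c (vzero k) = vzero k"
  by (rule nth_equalityI) auto
lemma vsmul_cancel: "c \<noteq> 0 \<Longrightarrow> length a = length b \<Longrightarrow> vsmul c a = vsmul c b \<Longrightarrow> a = b"
  by (auto simp: list_eq_iff_nth_eq)

lemma vadd_less_vadd_lex:
  "length a = length b \<Longrightarrow> length c = length a \<Longrightarrow> a < b \<Longrightarrow> vadd a c < vadd b c"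
proof (induction a arbitrary: b c)
  case (Cons x xs)
  then obtain y ys z zs where "b = y # ys" "c = z # zs"
    by (metis length_Suc_conv)
  with Cons show ?case by auto
qed simp

lemma vadd_le_vadd_lex:
  "length a = length b \<Longrightarrow> length c = length a \<Longrightarrow> a \<le> b \<Longrightarrow> vadd a c \<le> vadd b c"
  using vadd_less_vadd_lex by (metis order.order_iff_strict)

lemma vdot_vadd:
  "length a = length r \<Longrightarrow> length b = length r \<Longrightarrow> vdot r (vadd a b) = vdot r a + vdot r b"
  by (simp add: vdot_def algebra_simps sum.distrib)
lemma vdot_vneg: "length a = length r \<Longrightarrow> vdot r (vneg a) = - vdot r a"
  by (simp add: vdot_def sum_negf)
lemma vdot_vsub:
  "length a = length r \<Longrightarrow> length b = length r \<Longrightarrow> vdot r (vsub a b) = vdot r a - vdot r b"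
  by (simp add: vdot_def algebra_simps sum_subtractf)
lemma vdot_vsmul_vbasis: "length r = k \<Longrightarrow> i < k \<Longrightarrow> vdot r (vsmul c (vbasis k i)) = c * r ! i"
  by (simp add: vdot_def nth_vbasis if_distrib cong: if_cong)

lemma vcontent_nonneg: "vcontent y \<ge> 0"
  by (simp add: vcontent_def)

lemma vcontent_vsmul: "vcontent (vsmul c y) = \<bar>c\<bar> * vcontent y"
proof -
  have "set (vsmul c y) = (*) c ` set y" by (simp add: vsmul_def)
  then show ?thesis by (simp add: vcontent_def Gcd_mult abs_mult)
qed

lemma vcontent_eq_0_iff: "vcontent y = 0 \<longleftrightarrow> y = vzero (length y)"
  by (auto simp: vcontent_def list_eq_iff_nth_eq in_set_conv_nth subset_iff)

lemma vcontent_factor: "\<exists>z. length z = length y \<and> y = vsmul (vcontent y) z"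
proof -
  have "y = vsmul (vcontent y) (map (\<lambda>a. a div vcontent y) y)"
    by (rule nth_equalityI) (auto simp: vcontent_def Gcd_dvd)
  then show ?thesis by (intro exI[of _ "map (\<lambda>a. a div vcontent y) y"]) simp
qed

section \<open>Additive maps of \<open>\<int>\<^sup>k\<close> and their matrices\<close>

lemma odd_degree_real_poly_has_root:
  fixes q :: "real poly"
  assumes odd: "odd (degree q)" and lc: "lead_coeff q > 0"
  shows "\<exists>x. poly q x = 0"
proof -
  define q' where "q' = - pcompose q [:0, -1:]"
  have "lead_coeff q' = lead_coeff q"
    using lead_coeff_comp[of "[:0, -1:]" q] odd by (simp add: q'_def)
  then obtain n1 n2 where n1: "\<forall>x\<ge>n1. poly q x \<ge> lead_coeff q"
    and n2: "\<forall>x\<ge>n2. poly q' x \<ge> lead_coeff q"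
    using poly_pinfty_gt_lc[OF lc] poly_pinfty_gt_lc[of q'] lc by metis
  define b where "b = max n1 (max n2 0) + 1"
  have "poly q b > 0" using n1 lc by (smt (verit) b_def)
  moreover have "poly q' b > 0" using n2 lc by (smt (verit) b_def)
  then have "poly q (- b) < 0" by (simp add: q'_def poly_pcompose)
  moreover have "- b < b" by (simp add: b_def)
  ultimately show ?thesis using poly_IVT_pos by blast
qed

lemma real_odd_root_of_unity: "(x :: real) ^ N = 1 \<Longrightarrow> odd N \<Longrightarrow> x = 1"
  using power_eq_1_iff[of x N] by (cases "x \<ge> 0") (auto simp: abs_if)

lemma smult_one_mat_mult_vec:
  "(v :: 'a :: comm_ring_1 vec) \<in> carrier_vec n \<Longrightarrow> (c \<cdot>\<^sub>m 1\<^sub>m n) *\<^sub>v v = c \<cdot>\<^sub>v v"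
proof -
  assume v: "v \<in> carrier_vec n"
  then have "c \<cdot>\<^sub>v v = c \<cdot>\<^sub>v (1\<^sub>m n *\<^sub>v v)" by simp
  also have "\<dots> = (c \<cdot>\<^sub>m 1\<^sub>m n) *\<^sub>v v" using v by auto
  finally show ?thesis by simp
qed

text \<open>A real matrix of odd size has a real eigenvalue; if its order is odd, that eigenvalue is \<open>1\<close>.\<close>

lemma det_id_minus_odd_order_real_mat:
  fixes R :: "real mat"
  assumes R: "R \<in> carrier_mat k k" and odd_k: "odd k" and odd_N: "odd N" and RN: "R ^\<^sub>m N = 1\<^sub>m k"
  shows "det (1\<^sub>m k - R) = 0"
proof -
  have "degree (char_poly R) = k \<and> coeff (char_poly R) k = 1" by (rule degree_monic_char_poly[OF R])
  then obtain lam where "poly (char_poly R) lam = 0"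
    using odd_degree_real_poly_has_root[of "char_poly R"] odd_k by auto
  then obtain v where ev: "eigenvector R v lam"
    using eigenvalue_root_char_poly[OF R] by (auto simp: eigenvalue_def)
  then have v: "v \<in> carrier_vec k" "v \<noteq> 0\<^sub>v k" "R *\<^sub>v v = lam \<cdot>\<^sub>v v"
    using R by (auto simp: eigenvector_def)
  obtain i where i: "i < k" "v $ i \<noteq> 0"
  proof (rule ccontr)
    assume "\<not> thesis"
    then have "v = 0\<^sub>v k" using v(1) that by (intro eq_vecI) auto
    then show False using v(2) by simp
  qed
  have vN: "v = lam ^ N \<cdot>\<^sub>v v" using eigenvector_pow[OF R ev, of N] RN v(1) by simp
  have "v $ i = lam ^ N * v $ i" using arg_cong[OF vN, of "\<lambda>w. w $ i"] i v(1) by simp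
  then have "lam ^ N = 1" using i(2) by simp
  then have "lam = 1" using real_odd_root_of_unity odd_N by blast
  then have "(1\<^sub>m k - R) *\<^sub>v v = 0\<^sub>v k"
    using minus_mult_distrib_mat_vec[OF one_carrier_mat R v(1)] v by simp
  then show ?thesis
    using det_0_iff_vec_prod_zero[of "1\<^sub>m k - R" k] v minus_carrier_mat[OF R] by blast
qed

locale additive_map =
  fixes k :: nat and L :: "int list \<Rightarrow> int list"
  assumes length_map: "length v = k \<Longrightarrow> length (L v) = k"
    and map_vadd: "length v = k \<Longrightarrow> length w = k \<Longrightarrow> L (vadd v w) = vadd (L v) (L w)"
begin

lemma map_vzero: "L (vzero k) = vzero k"
proof -
  have lz: "length (L (vzero k)) = k" by (simp add: length_map)
  have "L (vzero k) = vsub (vadd (L (vzero k)) (L (vzero k))) (L (vzero k))" using lz by simp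
  also have "\<dots> = vsub (L (vzero k)) (L (vzero k))" using map_vadd[of "vzero k" "vzero k"] by simp
  finally show ?thesis using lz by simp
qed

lemma map_vsub:
  assumes lv: "length v = k" and lw: "length w = k"
  shows "L (vsub v w) = vsub (L v) (L w)"
proof -
  have "L v = vadd (L (vsub v w)) (L w)" using map_vadd[of "vsub v w" w] lv lw by simp
  then show ?thesis using lv lw length_map by simp
qed

lemma map_vneg: "length v = k \<Longrightarrow> L (vneg v) = vneg (L v)"
proof -
  assume lv: "length v = k"
  have "vneg v = vsub (vzero k) v" "vneg (L v) = vsub (vzero k) (L v)"
    using lv length_map[OF lv] by (auto intro: nth_equalityI)
  then show ?thesis using map_vsub[of "vzero k" v] map_vzero lv by simp
qed

lemma map_vsmul_nat: "length v = k \<Longrightarrow> L (vsmul (int n) v) = vsmul (int n) (L v)"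
proof (induction n)
  case 0
  then show ?case using map_vzero length_map by simp
next
  case (Suc n)
  have "vsmul (int (Suc n)) v = vadd (vsmul (int n) v) v"
    "vsmul (int (Suc n)) (L v) = vadd (vsmul (int n) (L v)) (L v)"
    using Suc.prems length_map by (auto intro: nth_equalityI simp: algebra_simps)
  then show ?case using Suc map_vadd by simp
qed

lemma map_vsmul: "length v = k \<Longrightarrow> L (vsmul c v) = vsmul c (L v)"
proof (cases "c \<ge> 0")
  case True
  then show "length v = k \<Longrightarrow> ?thesis" using map_vsmul_nat[of v "nat c"] by simp
next
  case False
  define n where "n = nat (- c)"
  then have n: "c = - int n" using False by simp
  assume lv: "length v = k"
  have "vsmul c v = vneg (vsmul (int n) v)" "vsmul c (L v) = vneg (vsmul (int n) (L v))"
    using n by (auto intro: nth_equalityI)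
  then show ?thesis using map_vneg map_vsmul_nat[OF lv] lv by simp
qed

lemma length_funpow: "length v = k \<Longrightarrow> length ((L ^^ n) v) = k"
  by (induction n) (auto simp: length_map)

lemma additive_map_funpow: "additive_map k (L ^^ n)"
proof
  show "length v = k \<Longrightarrow> length ((L ^^ n) v) = k" for v by (rule length_funpow)
  show "length v = k \<Longrightarrow> length w = k \<Longrightarrow>
      (L ^^ n) (vadd v w) = vadd ((L ^^ n) v) ((L ^^ n) w)" for v w
    by (induction n) (auto simp: map_vadd length_funpow)
qed

lemma additive_map_right_inverse:
  assumes inj: "inj_on L (Zvec k)"
    and R: "\<And>y. length y = k \<Longrightarrow> length (R y) = k \<and> L (R y) = y"
  shows "additive_map k R"
proof
  fix v w :: "int list" assume lv: "length v = k" and lw: "length w = k"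
  show "length (R v) = k" using R lv by simp
  have "L (R (vadd v w)) = L (vadd (R v) (R w))" using R lv lw map_vadd by simp
  then show "R (vadd v w) = vadd (R v) (R w)"
    by (rule inj_onD[OF inj]) (use R lv lw in auto)
qed

lemma vcontent_dvd_vcontent_map: "length y = k \<Longrightarrow> vcontent y dvd vcontent (L y)"
proof -
  assume "length y = k"
  then obtain z where z: "length z = k" "y = vsmul (vcontent y) z" using vcontent_factor by metis
  then have "L y = vsmul (vcontent y) (L z)" using map_vsmul by metis
  then show ?thesis by (simp add: vcontent_vsmul abs_of_nonneg[OF vcontent_nonneg])
qed

lemma vcontent_map:
  assumes inj: "inj_on L (Zvec k)" and surj: "L ` Zvec k = Zvec k" and ly: "length y = k"
  shows "vcontent (L y) = vcontent y"
proof -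
  define R where "R = inv_into (Zvec k) L"
  have R: "length (R y) = k \<and> L (R y) = y" if "length y = k" for y
    using that surj inv_into_into[of y L "Zvec k"] f_inv_into_f[of y L "Zvec k"] by (auto simp: R_def)
  interpret R: additive_map k R by (rule additive_map_right_inverse[OF inj R])
  have "R (L y) = y" using inj ly by (simp add: R_def)
  then have "vcontent (L y) dvd vcontent y"
    using R.vcontent_dvd_vcontent_map[of "L y"] length_map[OF ly] by simp
  then show ?thesis using vcontent_dvd_vcontent_map[OF ly] vcontent_nonneg by (simp add: zdvd_antisym_nonneg)
qed

lemma nth_map_expansion:
  assumes lv: "length v = k" and r: "r < k"
  shows "L v ! r = (\<Sum>j<k. L (vbasis k j) ! r * v ! j)"
proof -
  define pre where "pre i = take i v @ vzero (k - i)" for i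
  have "L (pre i) ! r = (\<Sum>j<i. L (vbasis k j) ! r * v ! j)" if "i \<le> k" for i
    using that
  proof (induction i)
    case 0
    then show ?case using map_vzero r by (simp add: pre_def)
  next
    case (Suc i)
    have "pre (Suc i) = vadd (pre i) (vsmul (v ! i) (vbasis k i))"
      using Suc.prems lv
      by (intro nth_equalityI) (auto simp: pre_def nth_append nth_vbasis min_def take_Suc_conv_app_nth)
    then have "L (pre (Suc i)) = vadd (L (pre i)) (vsmul (v ! i) (L (vbasis k i)))"
      using Suc.prems lv by (simp add: map_vadd map_vsmul pre_def)
    then show ?case using Suc lv r length_map[of "pre i"] length_map[of "vbasis k i"]
      by (simp add: pre_def algebra_simps)
  qed
  moreover have "pre k = v" using lv by (simp add: pre_def)
  ultimately show ?thesis by (metis order_refl)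
qed

definition mat_L :: "int mat" where "mat_L = mat k k (\<lambda>(i, j). L (vbasis k j) ! i)"

definition id_minus_mat_L :: "int mat" where "id_minus_mat_L = 1\<^sub>m k - mat_L"

lemma mat_L_carrier [simp]: "mat_L \<in> carrier_mat k k"
  by (simp add: mat_L_def)

lemma mat_L_dims [simp]: "dim_row mat_L = k" "dim_col mat_L = k"
  by (simp_all add: mat_L_def)

lemma id_minus_mat_L_carrier [simp]: "id_minus_mat_L \<in> carrier_mat k k"
  unfolding id_minus_mat_L_def by (rule minus_carrier_mat[OF mat_L_carrier])

lemma vec_of_list_carrier [simp]: "length v = k \<Longrightarrow> vec_of_list v \<in> carrier_vec k"
  by (rule carrier_vecI) simp

lemma mat_L_mult_vec: "length v = k \<Longrightarrow> mat_L *\<^sub>v vec_of_list v = vec_of_list (L v)"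
  by (rule eq_vecI)
    (auto simp: mat_L_def length_map scalar_prod_def vec_of_list_index atLeast0LessThan
      nth_map_expansion intro!: sum.cong)

lemma id_minus_mat_L_mult_vec:
  assumes lv: "length v = k"
  shows "id_minus_mat_L *\<^sub>v vec_of_list v = vec_of_list (vsub v (L v))"
proof -
  have "id_minus_mat_L *\<^sub>v vec_of_list v = vec_of_list v - vec_of_list (L v)"
    unfolding id_minus_mat_L_def
    using minus_mult_distrib_mat_vec[OF one_carrier_mat mat_L_carrier vec_of_list_carrier[OF lv]] lv
    by (simp add: mat_L_mult_vec)
  also have "\<dots> = vec_of_list (vsub v (L v))"
    using lv length_map by (intro eq_vecI) (auto simp: vec_of_list_index)
  finally show ?thesis .
qed

lemma mat_L_pow_mult_vec: "length v = k \<Longrightarrow> mat_L ^\<^sub>m N *\<^sub>v vec_of_list v = vec_of_list ((L ^^ N) v)"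
proof (induction N arbitrary: v)
  case (Suc N)
  have "mat_L ^\<^sub>m Suc N *\<^sub>v vec_of_list v = mat_L ^\<^sub>m N *\<^sub>v (mat_L *\<^sub>v vec_of_list v)"
    using assoc_mult_mat_vec[OF pow_carrier_mat[OF mat_L_carrier] mat_L_carrier] Suc.prems by simp
  also have "\<dots> = vec_of_list ((L ^^ N) (L v))" using Suc length_map by (simp add: mat_L_mult_vec)
  finally show ?case by (simp only: funpow_Suc_right o_apply)
qed simp

lemma mat_mult_vbasis:
  "A \<in> carrier_mat k k \<Longrightarrow> i < k \<Longrightarrow> j < k \<Longrightarrow> (A *\<^sub>v vec_of_list (vbasis k j)) $ i = A $$ (i, j)"
proof -
  assume A: "A \<in> carrier_mat k k" and i: "i < k" and j: "j < k"
  have "(A *\<^sub>v vec_of_list (vbasis k j)) $ i = (\<Sum>l\<in>{0..<k}. row A i $ l * vec_of_list (vbasis k j) $ l)"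
    using A i by (simp add: scalar_prod_def)
  also have "\<dots> = (\<Sum>l\<in>{0..<k}. if l = j then A $$ (i, l) else 0)"
    by (rule sum.cong) (use A i in \<open>auto simp: vec_of_list_index nth_vbasis\<close>)
  also have "\<dots> = A $$ (i, j)" using j by simp
  finally show ?thesis .
qed

lemma det_zero_imp_annihilator:
  assumes "det id_minus_mat_L = 0"
  shows "\<exists>r. length r = k \<and> r \<noteq> vzero k \<and> (\<forall>v. length v = k \<longrightarrow> vdot r (vsub v (L v)) = 0)"
proof -
  obtain x where x: "x \<in> carrier_vec k" "x \<noteq> 0\<^sub>v k" "transpose_mat id_minus_mat_L *\<^sub>v x = 0\<^sub>v k"
    using assms det_transpose[of id_minus_mat_L k] det_0_iff_vec_prod_zero[of "transpose_mat id_minus_mat_L" k]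
    by auto
  define r where "r = list_of_vec x"
  have "r \<noteq> vzero k"
  proof
    assume "r = vzero k"
    then have "vec_of_list r = 0\<^sub>v k" by (intro eq_vecI) (auto simp: vec_of_list_index)
    then show False using x by (simp add: r_def vec_list)
  qed
  moreover have "vdot r (vsub v (L v)) = 0" if lv: "length v = k" for v
  proof -
    have "x \<bullet> (id_minus_mat_L *\<^sub>v vec_of_list v) = (transpose_mat id_minus_mat_L *\<^sub>v x) \<bullet> vec_of_list v"
      using transpose_vec_mult_scalar[OF id_minus_mat_L_carrier _ x(1)] lv by simp
    then have "x \<bullet> vec_of_list (vsub v (L v)) = 0" using x lv by (simp add: id_minus_mat_L_mult_vec)
    then show ?thesis using x(1) lv length_map
      by (simp add: vdot_def scalar_prod_def r_def vec_of_list_index atLeast0LessThan)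
  qed
  ultimately show ?thesis using x(1) by (intro exI[of _ r]) (auto simp: r_def)
qed

lemma det_nonzero_imp_no_fixed_point:
  assumes D: "det id_minus_mat_L \<noteq> 0" and lv: "length v = k" and fixed: "L v = v"
  shows "v = vzero k"
proof -
  have adj: "adj_mat id_minus_mat_L \<in> carrier_mat k k" by (rule adj_mat(1)[OF id_minus_mat_L_carrier])
  have "id_minus_mat_L *\<^sub>v vec_of_list v = 0\<^sub>v k"
    using id_minus_mat_L_mult_vec[OF lv] fixed lv by (intro eq_vecI) (auto simp: vec_of_list_index)
  then have "(adj_mat id_minus_mat_L * id_minus_mat_L) *\<^sub>v vec_of_list v = 0\<^sub>v k"
    using assoc_mult_mat_vec[OF adj id_minus_mat_L_carrier vec_of_list_carrier[OF lv]] adj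
    by (auto intro!: eq_vecI)
  then have "det id_minus_mat_L \<cdot>\<^sub>v vec_of_list v = 0\<^sub>v k"
    using adj_mat(3)[OF id_minus_mat_L_carrier] smult_one_mat_mult_vec[OF vec_of_list_carrier[OF lv]] by simp
  then have "det id_minus_mat_L * v ! i = 0" if "i < k" for i
    using that lv by (metis index_smult_vec(1) index_zero_vec(1) length_list_of_vec list_vec vec_of_list_index)
  then show ?thesis using D lv by (intro nth_equalityI) auto
qed

lemma det_multiple_in_range:
  assumes ly: "length y = k"
  shows "\<exists>x. length x = k \<and> vsub x (L x) = vsmul (det id_minus_mat_L) y"
proof -
  define D where "D = id_minus_mat_L"
  have D: "D \<in> carrier_mat k k" "adj_mat D \<in> carrier_mat k k"
    using adj_mat(1)[OF id_minus_mat_L_carrier] by (simp_all add: D_def)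
  define x where "x = list_of_vec (adj_mat D *\<^sub>v vec_of_list y)"
  have lx: "length x = k" using D ly by (simp add: x_def)
  have "vec_of_list (vsub x (L x)) = (D * adj_mat D) *\<^sub>v vec_of_list y"
    using id_minus_mat_L_mult_vec[OF lx] assoc_mult_mat_vec[OF D vec_of_list_carrier[OF ly]]
    by (simp add: x_def D_def vec_list)
  also have "\<dots> = det D \<cdot>\<^sub>v vec_of_list y"
    using adj_mat(2)[OF D(1)] smult_one_mat_mult_vec[OF vec_of_list_carrier[OF ly]] by simp
  also have "\<dots> = vec_of_list (vsmul (det D) y)"
    using ly by (intro eq_vecI) (auto simp: vec_of_list_index)
  finally show ?thesis using lx by (metis D_def list_vec)
qed

lemma map_eq_id_if_fixes_basis:
  assumes basis: "\<And>i. i < k \<Longrightarrow> L (vbasis k i) = vbasis k i" and lv: "length v = k"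
  shows "L v = v"
proof -
  have "mat_L = 1\<^sub>m k" by (rule eq_matI) (auto simp: mat_L_def basis nth_vbasis)
  then have "vec_of_list (L v) = vec_of_list v" using mat_L_mult_vec[OF lv] lv by simp
  then show ?thesis by (metis list_vec)
qed

lemma odd_period_imp_det_zero:
  assumes odd_k: "odd k" and odd_N: "odd N" and period: "\<And>v. length v = k \<Longrightarrow> (L ^^ N) v = v"
  shows "det id_minus_mat_L = 0"
proof -
  have "mat_L ^\<^sub>m N = 1\<^sub>m k"
  proof (rule eq_matI)
    fix i j assume i: "i < dim_row (1\<^sub>m k)" and j: "j < dim_col (1\<^sub>m k)"
    have "(mat_L ^\<^sub>m N) $$ (i, j) = (mat_L ^\<^sub>m N *\<^sub>v vec_of_list (vbasis k j)) $ i"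
      using mat_mult_vbasis[OF pow_carrier_mat[OF mat_L_carrier]] i j by simp
    also have "\<dots> = 1\<^sub>m k $$ (i, j)"
      using i j mat_L_pow_mult_vec[of "vbasis k j" N] period by (simp add: vec_of_list_index nth_vbasis)
    finally show "(mat_L ^\<^sub>m N) $$ (i, j) = 1\<^sub>m k $$ (i, j)" .
  qed auto
  define R :: "real mat" where "R = map_mat real_of_int mat_L"
  have R: "R \<in> carrier_mat k k" by (simp add: R_def)
  have "map_mat real_of_int (mat_L ^\<^sub>m N) = R ^\<^sub>m N"
    unfolding R_def by (rule of_int_hom.mat_hom_pow[OF mat_L_carrier])
  moreover have "map_mat real_of_int (1\<^sub>m k) = 1\<^sub>m k" by (rule eq_matI) auto
  ultimately have "R ^\<^sub>m N = 1\<^sub>m k" using \<open>mat_L ^\<^sub>m N = 1\<^sub>m k\<close> by simp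
  then have "det (1\<^sub>m k - R) = 0" by (rule det_id_minus_odd_order_real_mat[OF R odd_k odd_N])
  moreover have "1\<^sub>m k - R = map_mat real_of_int id_minus_mat_L"
    by (auto simp: R_def id_minus_mat_L_def intro!: eq_matI)
  ultimately have "real_of_int (det id_minus_mat_L) = 0" using of_int_hom.hom_det by metis
  then show ?thesis by simp
qed

end

section \<open>Integer iterates of a bijection and signed orbit indicators\<close>

locale bijection_on =
  fixes S :: "'a set" and A :: "'a \<Rightarrow> 'a"
  assumes bij: "bij_betw A S S"
begin

definition Ainv :: "'a \<Rightarrow> 'a" where "Ainv = inv_into S A"

lemma A_in: "x \<in> S \<Longrightarrow> A x \<in> S"
  using bij by (auto simp: bij_betw_def)

lemma Ainv_in: "x \<in> S \<Longrightarrow> Ainv x \<in> S"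
  using bij by (simp add: Ainv_def bij_betw_imp_surj_on inv_into_into)

lemma A_Ainv: "x \<in> S \<Longrightarrow> A (Ainv x) = x"
  using bij by (simp add: Ainv_def bij_betw_inv_into_right)

lemma Ainv_A: "x \<in> S \<Longrightarrow> Ainv (A x) = x"
  using bij by (simp add: Ainv_def bij_betw_inv_into_left)

definition iter :: "int \<Rightarrow> 'a \<Rightarrow> 'a" where
  "iter j = (if 0 \<le> j then A ^^ nat j else Ainv ^^ nat (- j))"

lemma funpow_A_in: "x \<in> S \<Longrightarrow> (A ^^ n) x \<in> S"
  by (induction n) (auto simp: A_in)

lemma iter_in: "x \<in> S \<Longrightarrow> iter j x \<in> S"
proof -
  assume x: "x \<in> S"
  have "(Ainv ^^ n) x \<in> S" for n by (induction n) (auto simp: x Ainv_in)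
  then show ?thesis using funpow_A_in[OF x] by (simp add: iter_def)
qed

lemma iter_0 [simp]: "iter 0 x = x"
  by (simp add: iter_def)

lemma iter_succ: "x \<in> S \<Longrightarrow> iter (j + 1) x = A (iter j x)"
proof (cases "0 \<le> j")
  case True
  then have "nat (j + 1) = Suc (nat j)" by simp
  then show ?thesis using True by (simp add: iter_def)
next
  case False
  assume x: "x \<in> S"
  show ?thesis
  proof (cases "j = -1")
    case True
    then show ?thesis using x by (simp add: iter_def A_Ainv)
  next
    case False
    with \<open>\<not> 0 \<le> j\<close> have "nat (- j) = Suc (nat (- (j + 1)))" "\<not> 0 \<le> j + 1" by auto
    then show ?thesis using \<open>\<not> 0 \<le> j\<close> iter_in[OF x, of "j + 1"]
      by (simp add: iter_def A_Ainv)
  qed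
qed

lemma iter_pred: "x \<in> S \<Longrightarrow> iter (j - 1) x = Ainv (iter j x)"
  using iter_succ[of x "j - 1"] Ainv_A iter_in by simp

lemma iter_add: "x \<in> S \<Longrightarrow> iter (i + j) x = iter i (iter j x)"
proof (induction i rule: int_induct[where k = 0])
  case (step1 i)
  have "iter (i + 1 + j) x = A (iter (i + j) x)"
    using iter_succ[OF step1.prems, of "i + j"] by (simp add: algebra_simps)
  then show ?case using step1 iter_succ iter_in by simp
next
  case (step2 i)
  have "iter (i - 1 + j) x = Ainv (iter (i + j) x)"
    using iter_pred[OF step2.prems, of "i + j"] by (simp add: algebra_simps)
  then show ?case using step2 iter_pred iter_in by simp
qed simp

lemma iter_eq_imp_period:
  assumes x: "x \<in> S" and e: "iter i x = iter j x"
  shows "iter (i - j) x = x"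
  using iter_add[OF x, of "- j" i] iter_add[OF x, of "- j" j] e by (simp add: algebra_simps)

lemma iter_period_imp_funpow:
  assumes x: "x \<in> S" and e: "iter j x = x"
  shows "(A ^^ nat \<bar>j\<bar>) x = x"
proof (cases "0 \<le> j")
  case True
  then show ?thesis using e by (simp add: iter_def)
next
  case False
  have "iter (- j) x = x" using iter_eq_imp_period[OF x, of 0 j] e by simp
  then show ?thesis using False by (simp add: iter_def)
qed

lemma invariant_iter:
  assumes inv: "\<And>y. y \<in> S \<Longrightarrow> \<gamma> (A y) = \<gamma> y" and x: "x \<in> S"
  shows "\<gamma> (iter j x) = \<gamma> x"
proof (induction j rule: int_induct[where k = 0])
  case (step1 i)
  then show ?case using iter_succ[OF x] inv iter_in[OF x] by simp
next
  case (step2 i)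
  have "\<gamma> (iter i x) = \<gamma> (iter (i - 1) x)"
    using iter_succ[OF x, of "i - 1"] inv iter_in[OF x] by simp
  then show ?case using step2 by simp
qed simp

text \<open>The exponent is picked by \<open>SOME\<close>,
  so for \<open>s = -1\<close> this is meaningful only when the orbit of \<open>x\<^sub>0\<close> has no odd period.\<close>

definition orbit_sign :: "int \<Rightarrow> 'a \<Rightarrow> 'a \<Rightarrow> int" where
  "orbit_sign s x\<^sub>0 y =
     (if \<exists>j. iter j x\<^sub>0 = y then (if even (SOME j. iter j x\<^sub>0 = y) then 1 else s) else 0)"

context
  fixes s :: int and x\<^sub>0 :: 'a
  assumes x\<^sub>0: "x\<^sub>0 \<in> S"
    and sign: "s = 1 \<or> s = -1 \<and> (\<forall>j. iter j x\<^sub>0 = x\<^sub>0 \<longrightarrow> even j)"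
begin

lemma orbit_sign_iter: "orbit_sign s x\<^sub>0 (iter j x\<^sub>0) = (if even j then 1 else s)"
proof -
  define i where "i = (SOME i. iter i x\<^sub>0 = iter j x\<^sub>0)"
  have "iter i x\<^sub>0 = iter j x\<^sub>0" unfolding i_def by (rule someI[of _ j]) (rule refl)
  then have "s = 1 \<or> even (i - j)"
    using sign iter_eq_imp_period[OF x\<^sub>0] by blast
  then have "s = 1 \<or> even i = even j" by auto
  then show ?thesis by (auto simp: orbit_sign_def i_def[symmetric])
qed

lemma orbit_sign_base: "orbit_sign s x\<^sub>0 x\<^sub>0 = 1"
  using orbit_sign_iter[of 0] by simp

lemma orbit_sign_step:
  assumes y: "y \<in> S"
  shows "orbit_sign s x\<^sub>0 (A y) = s * orbit_sign s x\<^sub>0 y"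
proof (cases "\<exists>j. iter j x\<^sub>0 = y")
  case True
  then obtain j where j: "iter j x\<^sub>0 = y" by blast
  then have "A y = iter (j + 1) x\<^sub>0" using iter_succ[OF x\<^sub>0] by simp
  then show ?thesis using orbit_sign_iter j sign by auto
next
  case False
  have "\<not> (\<exists>j. iter j x\<^sub>0 = A y)"
  proof
    assume "\<exists>j. iter j x\<^sub>0 = A y"
    then obtain j where "iter j x\<^sub>0 = A y" by blast
    then have "iter (j - 1) x\<^sub>0 = y" using iter_pred[OF x\<^sub>0] Ainv_A[OF y] by simp
    then show False using False by blast
  qed
  then show ?thesis using False by (simp add: orbit_sign_def)
qed

end

end

section \<open>The wreath product \<open>\<int>\<^sub>m \<wr> \<int>\<^sup>k\<close> and its base group\<close>

lemma vsub_vneg: "length x = length v \<Longrightarrow> vsub x (vneg v) = vadd x v"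
  by (rule nth_equalityI) auto

lemma finite_support_translate:
  assumes fin: "finite {x. g x \<noteq> 0}" and lv: "length v = k"
  shows "finite {x. length x = k \<and> g (vsub x v) \<noteq> 0}"
proof (rule finite_subset[OF _ finite_imageI[OF fin, of "\<lambda>y. vadd y v"]])
  show "{x. length x = k \<and> g (vsub x v) \<noteq> 0} \<subseteq> (\<lambda>y. vadd y v) ` {x. g x \<noteq> 0}"
  proof
    fix x assume x: "x \<in> {x. length x = k \<and> g (vsub x v) \<noteq> 0}"
    then have "x = vadd (vsub x v) v" using lv by simp
    then show "x \<in> (\<lambda>y. vadd y v) ` {x. g x \<noteq> 0}" using x by blast
  qed
qed

lemma wr_mult_Pair:
  "wr_mult m k (f, v) (g, w) = ((\<lambda>x. if length x = k then (f x + g (vsub x v)) mod int m else 0), vadd v w)"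
  unfolding wr_mult_def fst_conv snd_conv by (rule refl)

lemma wreath_simps [simp]:
  "carrier (wreath m k) = wr_carrier m k"
  "monoid.mult (wreath m k) = wr_mult m k"
  "monoid.one (wreath m k) = (\<lambda>x. 0, vzero k)"
  by (simp_all add: wreath_def)

lemma mem_wr_carrier:
  "(f, v) \<in> wr_carrier m k \<longleftrightarrow> length v = k \<and> (\<forall>x. 0 \<le> f x \<and> f x < int m)
     \<and> (\<forall>x. length x \<noteq> k \<longrightarrow> f x = 0) \<and> finite {x. f x \<noteq> 0}"
  by (simp add: wr_carrier_def)

definition wr_inv :: "nat \<Rightarrow> nat \<Rightarrow> (int list \<Rightarrow> int) \<times> int list \<Rightarrow> (int list \<Rightarrow> int) \<times> int list" where
  "wr_inv m k a = ((\<lambda>x. if length x = k then (- fst a (vadd x (snd a))) mod int m else 0), vneg (snd a))"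

definition base_add :: "nat \<Rightarrow> nat \<Rightarrow> (int list \<Rightarrow> int) \<Rightarrow> (int list \<Rightarrow> int) \<Rightarrow> int list \<Rightarrow> int" where
  "base_add m k f g = (\<lambda>x. if length x = k then (f x + g x) mod int m else 0)"

definition base_scale :: "nat \<Rightarrow> nat \<Rightarrow> int \<Rightarrow> (int list \<Rightarrow> int) \<Rightarrow> int list \<Rightarrow> int" where
  "base_scale m k c f = (\<lambda>x. if length x = k then (c * f x) mod int m else 0)"

definition base_neg :: "nat \<Rightarrow> nat \<Rightarrow> (int list \<Rightarrow> int) \<Rightarrow> int list \<Rightarrow> int" where
  "base_neg m k f = (\<lambda>x. if length x = k then (- f x) mod int m else 0)"

definition shift :: "nat \<Rightarrow> int list \<Rightarrow> (int list \<Rightarrow> int) \<Rightarrow> int list \<Rightarrow> int" where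
  "shift k v u = (\<lambda>x. if length x = k then u (vsub x v) else 0)"

definition delta :: "int list \<Rightarrow> int list \<Rightarrow> int" where
  "delta y = (\<lambda>x. if x = y then 1 else 0)"

lemma wr_mult_base: "wr_mult m k (f, vzero k) (g, vzero k) = (base_add m k f g, vzero k)"
  by (auto simp: wr_mult_Pair base_add_def fun_eq_iff)

lemma wr_inv_base: "wr_inv m k (g, vzero k) = (base_neg m k g, vzero k)"
  by (auto simp: wr_inv_def base_neg_def vneg_def fun_eq_iff)

lemma shift_closed:
  assumes a: "(u, vzero k) \<in> wr_carrier m k" and lv: "length v = k"
  shows "(shift k v u, vzero k) \<in> wr_carrier m k"
proof -
  have "{x. shift k v u x \<noteq> 0} = {x. length x = k \<and> u (vsub x v) \<noteq> 0}"
    by (auto simp: shift_def)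
  then show ?thesis
    using a finite_support_translate[of u v k] lv by (auto simp: mem_wr_carrier shift_def)
qed

lemma wr_mult_base_conj:
  assumes "(c, v) \<in> wr_carrier m k"
  shows "wr_mult m k (c, v) (u, vzero k) = wr_mult m k (shift k v u, vzero k) (c, v)"
  using assms by (auto simp: wr_mult_Pair shift_def fun_eq_iff add.commute mem_wr_carrier)

lemma wr_inv_mult:
  assumes a: "(f, v) \<in> wr_carrier m k"
  shows "wr_mult m k (wr_inv m k (f, v)) (f, v) = (\<lambda>x. 0, vzero k)"
proof -
  have lv: "length v = k" using a by (simp add: mem_wr_carrier)
  have "(\<lambda>x. if length x = k then ((if length x = k then (- f (vadd x v)) mod int m else 0)
        + f (vsub x (vneg v))) mod int m else 0) = (\<lambda>x. 0)"
    using lv by (auto simp: vsub_vneg mod_add_left_eq)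
  then show ?thesis using lv unfolding wr_inv_def fst_conv snd_conv wr_mult_Pair by simp
qed

context
  fixes m k :: nat
  assumes m_pos: "0 < m"
begin

lemma wr_mult_closed:
  assumes a: "(f, v) \<in> wr_carrier m k" and b: "(g, w) \<in> wr_carrier m k"
  shows "wr_mult m k (f, v) (g, w) \<in> wr_carrier m k"
proof -
  have "{x. (if length x = k then (f x + g (vsub x v)) mod int m else 0) \<noteq> 0}
      \<subseteq> {x. f x \<noteq> 0} \<union> {x. length x = k \<and> g (vsub x v) \<noteq> 0}"
    by auto
  moreover have "finite ({x. f x \<noteq> 0} \<union> {x. length x = k \<and> g (vsub x v) \<noteq> 0})"
    using a b finite_support_translate[of g v k] by (simp add: mem_wr_carrier)
  ultimately show ?thesis using a b m_pos by (auto simp: wr_mult_Pair mem_wr_carrier finite_subset)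
qed

lemma wr_inv_closed:
  assumes a: "(f, v) \<in> wr_carrier m k"
  shows "wr_inv m k (f, v) \<in> wr_carrier m k"
proof -
  have lv: "length v = k" using a by (simp add: mem_wr_carrier)
  have "{x. (length x = k \<longrightarrow> (- f (vadd x v)) mod int m \<noteq> 0) \<and> length x = k}
      \<subseteq> {x. length x = k \<and> f (vsub x (vneg v)) \<noteq> 0}"
    using lv by (auto simp: vsub_vneg)
  moreover have "finite {x. length x = k \<and> f (vsub x (vneg v)) \<noteq> 0}"
    using a finite_support_translate[of f "vneg v" k] by (simp add: mem_wr_carrier)
  ultimately have "finite {x. (length x = k \<longrightarrow> (- f (vadd x v)) mod int m \<noteq> 0) \<and> length x = k}"
    by (rule finite_subset)
  then show ?thesis using a m_pos by (auto simp: wr_inv_def mem_wr_carrier)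
qed

lemma group_wreath: "group (wreath m k)"
proof (rule groupI)
  fix x y assume "x \<in> carrier (wreath m k)" "y \<in> carrier (wreath m k)"
  then show "x \<otimes>\<^bsub>wreath m k\<^esub> y \<in> carrier (wreath m k)"
    using wr_mult_closed by (cases x, cases y) auto
next
  show "\<one>\<^bsub>wreath m k\<^esub> \<in> carrier (wreath m k)" using m_pos by (auto simp: mem_wr_carrier)
next
  fix x y z assume "x \<in> carrier (wreath m k)" "y \<in> carrier (wreath m k)" "z \<in> carrier (wreath m k)"
  moreover obtain f v g w h u where "x = (f, v)" "y = (g, w)" "z = (h, u)" by (metis prod.exhaust)
  ultimately have xyz: "x = (f, v)" "y = (g, w)" "z = (h, u)" "length v = k" "length w = k" "length u = k"
    by (auto simp: mem_wr_carrier)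
  have "(if length x = k then ((if length x = k then (f x + g (vsub x v)) mod int m else 0)
        + h (vsub x (vadd v w))) mod int m else 0) =
      (if length x = k then (f x + (if length (vsub x v) = k
        then (g (vsub x v) + h (vsub (vsub x v) w)) mod int m else 0)) mod int m else 0)" for x
    using xyz by (simp add: vsub_vsub mod_add_right_eq mod_add_left_eq add.assoc)
  then show "x \<otimes>\<^bsub>wreath m k\<^esub> y \<otimes>\<^bsub>wreath m k\<^esub> z = x \<otimes>\<^bsub>wreath m k\<^esub> (y \<otimes>\<^bsub>wreath m k\<^esub> z)"
    using xyz by (simp add: wr_mult_Pair vadd_assoc)
next
  fix x assume "x \<in> carrier (wreath m k)"
  then show "\<one>\<^bsub>wreath m k\<^esub> \<otimes>\<^bsub>wreath m k\<^esub> x = x"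
    by (cases x) (auto simp: wr_mult_Pair mem_wr_carrier fun_eq_iff)
next
  fix x assume "x \<in> carrier (wreath m k)"
  then show "\<exists>y\<in>carrier (wreath m k). y \<otimes>\<^bsub>wreath m k\<^esub> x = \<one>\<^bsub>wreath m k\<^esub>"
    using wr_inv_closed wr_inv_mult by (cases x) (metis wreath_simps)
qed

lemma inv_wreath: "x \<in> wr_carrier m k \<Longrightarrow> inv\<^bsub>wreath m k\<^esub> x = wr_inv m k x"
  using group.inv_equality[OF group_wreath] wr_inv_closed wr_inv_mult
  by (cases x) (metis wreath_simps)

lemma base_add_closed:
  "(f, vzero k) \<in> wr_carrier m k \<Longrightarrow> (g, vzero k) \<in> wr_carrier m k \<Longrightarrow>
     (base_add m k f g, vzero k) \<in> wr_carrier m k"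
  by (metis wr_mult_base wr_mult_closed)

lemma snd_wr_pow:
  assumes a: "(f, v) \<in> wr_carrier m k"
  shows "snd ((f, v) [^]\<^bsub>wreath m k\<^esub> (n::nat)) = vsmul (int n) v"
proof (induction n)
  case 0
  then show ?case using a by (auto simp: mem_wr_carrier intro: nth_equalityI)
next
  case (Suc n)
  have lv: "length v = k" using a by (simp add: mem_wr_carrier)
  obtain g w where gw: "(f, v) [^]\<^bsub>wreath m k\<^esub> n = (g, w)" by (metis prod.exhaust)
  have "snd ((f, v) [^]\<^bsub>wreath m k\<^esub> Suc n) = vadd w v"
    by (simp add: gw wr_mult_Pair)
  also have "\<dots> = vsmul (int (Suc n)) v" using Suc gw lv
    by (intro nth_equalityI) (auto simp: algebra_simps)
  finally show ?case .
qed

lemma wr_pow_base: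
  assumes a: "(f, vzero k) \<in> wr_carrier m k"
  shows "(f, vzero k) [^]\<^bsub>wreath m k\<^esub> (n::nat) = (base_scale m k (int n) f, vzero k)"
proof (induction n)
  case 0
  then show ?case using a by (auto simp: base_scale_def fun_eq_iff mem_wr_carrier)
next
  case (Suc n)
  then show ?case
    by (auto simp: base_add_def base_scale_def fun_eq_iff mod_add_left_eq mod_add_right_eq
        algebra_simps wr_mult_base)
qed

lemma wr_pow_base_order: "(f, vzero k) \<in> wr_carrier m k \<Longrightarrow> (f, vzero k) [^]\<^bsub>wreath m k\<^esub> m = \<one>\<^bsub>wreath m k\<^esub>"
  by (auto simp: wr_pow_base base_scale_def fun_eq_iff mem_wr_carrier)

lemma wr_pow_order_imp_base:
  assumes a: "(f, v) \<in> wr_carrier m k" and t: "(f, v) [^]\<^bsub>wreath m k\<^esub> m = \<one>\<^bsub>wreath m k\<^esub>"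
  shows "v = vzero k"
proof -
  have lv: "length v = k" using a by (simp add: mem_wr_carrier)
  have "vsmul (int m) v = vzero k" using snd_wr_pow[OF a, of m] t by simp
  then have "int m * v ! i = 0" if "i < k" for i
    using that lv by (metis length_vsmul nth_replicate nth_vsmul)
  then show ?thesis using m_pos lv by (intro nth_equalityI) auto
qed

end

section \<open>Automorphisms of the wreath product\<close>

lemma infinite_reidemeister_classesI:
  assumes G: "group G" and hom: "\<phi> \<in> hom G G"
    and b: "\<And>t::nat. b t \<in> carrier G"
    and distinct: "\<And>s t. s \<noteq> t \<Longrightarrow> \<not> twisted_conj G \<phi> (b s) (b t)"
  shows "infinite (reidemeister_classes G \<phi>)"
proof -
  interpret group G by (rule G)
  define R where "R = {(g1, g2). g1 \<in> carrier G \<and> g2 \<in> carrier G \<and> twisted_conj G \<phi> g1 g2}"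
  have refl: "twisted_conj G \<phi> x x" if x: "x \<in> carrier G" for x
  proof -
    have "\<phi> \<one>\<^bsub>G\<^esub> = \<one>\<^bsub>G\<^esub>" using hom G by (simp add: hom_one)
    then have "\<one>\<^bsub>G\<^esub> \<otimes>\<^bsub>G\<^esub> x \<otimes>\<^bsub>G\<^esub> \<phi> (inv\<^bsub>G\<^esub> \<one>\<^bsub>G\<^esub>) = x" using x by simp
    then show ?thesis unfolding twisted_conj_def using one_closed by (metis (no_types))
  qed
  define cl where "cl t = R `` {b t}" for t
  have "inj cl"
  proof (rule injI)
    fix s t assume "cl s = cl t"
    then have "b t \<in> cl s" using refl b by (simp add: cl_def R_def)
    then show "s = t" using distinct by (auto simp: cl_def R_def)
  qed
  then have "infinite (range cl)" by (simp add: finite_image_iff)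
  moreover have "range cl \<subseteq> reidemeister_classes G \<phi>"
    unfolding cl_def reidemeister_classes_def R_def[symmetric] using b by (auto intro: quotientI)
  ultimately show ?thesis using finite_subset by blast
qed

locale wreath_aut =
  fixes m k :: nat and \<phi> :: "(int list \<Rightarrow> int) \<times> int list \<Rightarrow> (int list \<Rightarrow> int) \<times> int list"
  assumes m_pos: "0 < m" and phi_iso: "\<phi> \<in> iso (wreath m k) (wreath m k)"
begin

abbreviation W where "W \<equiv> wreath m k"

lemma group_W: "group W"
  by (rule group_wreath[OF m_pos])

lemma phi_hom: "\<phi> \<in> hom W W"
  using phi_iso by (simp add: iso_def)

lemma group_hom_phi: "group_hom W W \<phi>"
  using group_W phi_hom by (simp add: group_hom_def group_hom_axioms_def)

lemma phi_mult: "x \<in> carrier W \<Longrightarrow> y \<in> carrier W \<Longrightarrow> \<phi> (wr_mult m k x y) = wr_mult m k (\<phi> x) (\<phi> y)"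
  using group_hom.hom_mult[OF group_hom_phi] by fastforce

lemma phi_closed: "x \<in> wr_carrier m k \<Longrightarrow> \<phi> x \<in> wr_carrier m k"
  using phi_iso by (auto simp: iso_def hom_def)

lemma phi_inj: "inj_on \<phi> (wr_carrier m k)"
  using phi_iso by (auto simp: iso_def bij_betw_def)

lemma phi_surj: "\<phi> ` wr_carrier m k = wr_carrier m k"
  using phi_iso by (auto simp: iso_def bij_betw_def)

lemma phi_pow: "x \<in> carrier W \<Longrightarrow> \<phi> (x [^]\<^bsub>W\<^esub> (n::nat)) = \<phi> x [^]\<^bsub>W\<^esub> n"
  using group_hom.hom_nat_pow[OF group_hom_phi] by blast

lemma phi_one: "\<phi> (\<lambda>x. 0, vzero k) = (\<lambda>x. 0, vzero k)"
  using group_hom.hom_one[OF group_hom_phi] by simp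

definition mu :: "int list \<Rightarrow> int list" where "mu v = snd (\<phi> (\<lambda>x. 0, v))"
definition psi :: "(int list \<Rightarrow> int) \<Rightarrow> int list \<Rightarrow> int" where "psi f = fst (\<phi> (f, vzero k))"

lemma translation_closed: "length v = k \<Longrightarrow> (\<lambda>x. 0, v) \<in> wr_carrier m k"
  using m_pos by (simp add: mem_wr_carrier)

text \<open>The base group consists of the elements whose \<open>m\<close>-th power is trivial, so \<open>\<phi>\<close> preserves it.\<close>

lemma phi_base:
  assumes a: "(f, vzero k) \<in> wr_carrier m k"
  shows "\<phi> (f, vzero k) = (psi f, vzero k)"
proof -
  obtain g v where gv: "\<phi> (f, vzero k) = (g, v)" by (metis prod.exhaust)
  have "(g, v) [^]\<^bsub>W\<^esub> m = \<one>\<^bsub>W\<^esub>"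
    using phi_pow[of "(f, vzero k)" m] wr_pow_base_order[OF m_pos a] a gv phi_one by simp
  moreover have "(g, v) \<in> wr_carrier m k" using phi_closed[OF a] gv by simp
  ultimately have "v = vzero k" using wr_pow_order_imp_base[OF m_pos] by blast
  then show ?thesis using gv by (simp add: psi_def)
qed

lemma psi_closed: "(f, vzero k) \<in> wr_carrier m k \<Longrightarrow> (psi f, vzero k) \<in> wr_carrier m k"
  using phi_base phi_closed by fastforce

lemma wr_carrier_decompose:
  assumes "(f, v) \<in> wr_carrier m k"
  shows "(f, v) = wr_mult m k (f, vzero k) (\<lambda>x. 0, v)" "(f, vzero k) \<in> wr_carrier m k"
proof -
  have "length v = k" "\<forall>x. length x \<noteq> k \<longrightarrow> f x = 0" "\<forall>x. 0 \<le> f x \<and> f x < int m"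
    using assms by (auto simp: mem_wr_carrier)
  then show "(f, v) = wr_mult m k (f, vzero k) (\<lambda>x. 0, v)" by (auto simp: wr_mult_Pair fun_eq_iff)
  show "(f, vzero k) \<in> wr_carrier m k" using assms by (simp add: mem_wr_carrier)
qed

lemma snd_phi:
  assumes a: "(f, v) \<in> wr_carrier m k"
  shows "snd (\<phi> (f, v)) = mu v"
proof -
  have lv: "length v = k" using a by (simp add: mem_wr_carrier)
  have "\<phi> (f, v) = wr_mult m k (\<phi> (f, vzero k)) (\<phi> (\<lambda>x. 0, v))"
    using wr_carrier_decompose[OF a] phi_mult translation_closed[OF lv] by (metis wreath_simps(1))
  also have "\<dots> = wr_mult m k (psi f, vzero k) (\<phi> (\<lambda>x. 0, v))"
    using phi_base wr_carrier_decompose(2)[OF a] by simp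
  finally have "snd (\<phi> (f, v)) = vadd (vzero k) (mu v)"
    by (cases "\<phi> (\<lambda>x. 0, v)") (simp add: wr_mult_Pair mu_def)
  moreover have "length (mu v) = k"
    using phi_closed[OF translation_closed[OF lv]] unfolding mu_def
    by (cases "\<phi> (\<lambda>x. 0, v)") (simp add: mem_wr_carrier)
  ultimately show ?thesis by simp
qed

lemma length_mu: "length v = k \<Longrightarrow> length (mu v) = k"
  using phi_closed[OF translation_closed] unfolding mu_def by (metis mem_wr_carrier prod.collapse)

lemma mu_vadd:
  assumes "length v = k" "length w = k"
  shows "mu (vadd v w) = vadd (mu v) (mu w)"
proof -
  have "wr_mult m k (\<lambda>x. 0, v) (\<lambda>x. 0, w) = (\<lambda>x. 0, vadd v w)"
    by (simp add: wr_mult_Pair fun_eq_iff)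
  then have "\<phi> (\<lambda>x. 0, vadd v w) = wr_mult m k (\<phi> (\<lambda>x. 0, v)) (\<phi> (\<lambda>x. 0, w))"
    using phi_mult translation_closed assms by (metis wreath_simps(1))
  then show ?thesis unfolding mu_def
    by (cases "\<phi> (\<lambda>x. 0, v)", cases "\<phi> (\<lambda>x. 0, w)") (simp add: wr_mult_Pair)
qed

end

sublocale wreath_aut \<subseteq> MU: additive_map k mu
  by unfold_locales (simp_all add: length_mu mu_vadd)

context wreath_aut
begin

lemma mu_eq_vzero_imp:
  assumes lv: "length v = k" and z: "mu v = vzero k"
  shows "v = vzero k"
proof -
  obtain c where c: "\<phi> (\<lambda>x. 0, v) = (c, vzero k)"
    using z unfolding mu_def by (metis prod.collapse)
  have "(c, vzero k) \<in> wr_carrier m k" using c phi_closed[OF translation_closed[OF lv]] by simp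
  then have "\<phi> ((\<lambda>x. 0, v) [^]\<^bsub>W\<^esub> m) = \<phi> \<one>\<^bsub>W\<^esub>"
    using phi_pow[of "(\<lambda>x. 0, v)" m] translation_closed[OF lv] c wr_pow_base_order[OF m_pos] phi_one
    by simp
  moreover have "(\<lambda>x. 0, v) [^]\<^bsub>W\<^esub> m \<in> carrier W"
    using monoid.nat_pow_closed[OF group.is_monoid[OF group_W]] translation_closed[OF lv] by simp
  moreover have "\<one>\<^bsub>W\<^esub> \<in> carrier W" using monoid.one_closed[OF group.is_monoid[OF group_W]] by simp
  ultimately have "(\<lambda>x. 0, v) [^]\<^bsub>W\<^esub> m = \<one>\<^bsub>W\<^esub>"
    using phi_inj by (auto simp: inj_on_def)
  then show ?thesis using wr_pow_order_imp_base[OF m_pos] translation_closed[OF lv] by blast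
qed

lemma mu_inj: "inj_on mu (Zvec k)"
proof (rule inj_onI)
  fix v w assume v: "v \<in> Zvec k" and w: "w \<in> Zvec k" and e: "mu v = mu w"
  have "mu (vsub v w) = vzero k" using MU.map_vsub[of v w] v w e length_mu by simp
  then have "vsub v w = vzero k" using mu_eq_vzero_imp v w by simp
  then show "v = w" using v w vsub_eq_vzero_iff[of v w] by simp
qed

lemma mu_surj: "mu ` Zvec k = Zvec k"
proof
  show "mu ` Zvec k \<subseteq> Zvec k" using length_mu by auto
  show "Zvec k \<subseteq> mu ` Zvec k"
  proof
    fix y assume "y \<in> Zvec k"
    then have "(\<lambda>x. 0, y) \<in> \<phi> ` wr_carrier m k" using phi_surj translation_closed by simp
    then obtain f v where fv: "(f, v) \<in> wr_carrier m k" "\<phi> (f, v) = (\<lambda>x. 0, y)" by auto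
    then have "mu v = y" using snd_phi[OF fv(1)] by simp
    moreover have "length v = k" using fv(1) by (simp add: mem_wr_carrier)
    ultimately show "y \<in> mu ` Zvec k" by blast
  qed
qed

lemma psi_base_add:
  assumes a: "(f, vzero k) \<in> wr_carrier m k" and b: "(g, vzero k) \<in> wr_carrier m k"
  shows "psi (base_add m k f g) = base_add m k (psi f) (psi g)"
proof -
  have "\<phi> (base_add m k f g, vzero k) = wr_mult m k (\<phi> (f, vzero k)) (\<phi> (g, vzero k))"
    using phi_mult[of "(f, vzero k)" "(g, vzero k)"] a b wr_mult_base by (metis wreath_simps(1))
  then have "(psi (base_add m k f g), vzero k) = (base_add m k (psi f) (psi g), vzero k)"
    using phi_base a b base_add_closed[OF m_pos a b] wr_mult_base by metis
  then show ?thesis by simp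
qed

lemma psi_base_scale:
  assumes a: "(f, vzero k) \<in> wr_carrier m k"
  shows "psi (base_scale m k (int n) f) = base_scale m k (int n) (psi f)"
proof -
  have "(base_scale m k (int n) f, vzero k) \<in> wr_carrier m k"
    using wr_pow_base[OF m_pos a] monoid.nat_pow_closed[OF group.is_monoid[OF group_W]] a
    by (metis wreath_simps(1))
  moreover have "\<phi> (base_scale m k (int n) f, vzero k) = (base_scale m k (int n) (psi f), vzero k)"
    using phi_pow[of "(f, vzero k)" n] a wr_pow_base[OF m_pos a] wr_pow_base[OF m_pos psi_closed[OF a]]
      phi_base[OF a] by simp
  ultimately show ?thesis using phi_base by simp
qed

lemma psi_shift:
  assumes a: "(u, vzero k) \<in> wr_carrier m k" and ly: "length y = k"
  shows "psi (shift k y u) = shift k (mu y) (psi u)"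
proof -
  interpret group W by (rule group_W)
  have c0: "(\<lambda>x. 0, y) \<in> carrier W" using translation_closed[OF ly] by simp
  have ct: "(shift k y u, vzero k) \<in> carrier W" using shift_closed[OF a ly] by simp
  obtain c where c: "\<phi> (\<lambda>x. 0, y) = (c, mu y)" unfolding mu_def by (metis prod.collapse)
  have cc: "(c, mu y) \<in> wr_carrier m k" using c phi_closed c0 by force
  have "wr_mult m k (psi (shift k y u), vzero k) (c, mu y) = \<phi> (wr_mult m k (shift k y u, vzero k) (\<lambda>x. 0, y))"
    using phi_mult c0 ct phi_base shift_closed[OF a ly] c by simp
  also have "\<dots> = \<phi> (wr_mult m k (\<lambda>x. 0, y) (u, vzero k))"
    using wr_mult_base_conj[OF translation_closed[OF ly]] by simp
  also have "\<dots> = wr_mult m k (shift k (mu y) (psi u), vzero k) (c, mu y)"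
    using phi_mult c0 a phi_base c wr_mult_base_conj[OF cc] by simp
  finally have "wr_mult m k (psi (shift k y u), vzero k) (c, mu y) = wr_mult m k (shift k (mu y) (psi u), vzero k) (c, mu y)" .
  moreover have "(psi (shift k y u), vzero k) \<in> carrier W" "(shift k (mu y) (psi u), vzero k) \<in> carrier W"
    using psi_closed[OF shift_closed[OF a ly]] shift_closed[OF psi_closed[OF a]] length_mu[OF ly]
    by simp_all
  ultimately have "(psi (shift k y u), vzero k) = (shift k (mu y) (psi u), vzero k)"
    using right_cancel cc by (metis wreath_simps)
  then show ?thesis by simp
qed

lemma wreath_aut_inverse: "wreath_aut m k (inv_into (wr_carrier m k) \<phi>)"
  using group.iso_set_sym[OF group_W phi_iso] m_pos by (simp add: wreath_aut_def)

lemma twisted_conj_snd: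
  assumes g1: "g1 \<in> wr_carrier m k" and g2: "g2 \<in> wr_carrier m k" and tc: "twisted_conj W \<phi> g1 g2"
  obtains h where "h \<in> wr_carrier m k" "g1 = wr_mult m k (wr_mult m k h g2) (\<phi> (wr_inv m k h))"
    "snd g1 = vadd (vadd (snd h) (snd g2)) (vneg (mu (snd h)))"
proof -
  obtain h where h: "h \<in> wr_carrier m k" and e: "g1 = wr_mult m k (wr_mult m k h g2) (\<phi> (wr_inv m k h))"
    using tc inv_wreath[OF m_pos] unfolding twisted_conj_def by auto
  obtain f v where fv: "h = (f, v)" by (metis prod.exhaust)
  have lv: "length v = k" using h fv by (simp add: mem_wr_carrier)
  have "wr_inv m k h \<in> wr_carrier m k" using wr_inv_closed[OF m_pos] h fv by simp
  moreover have "snd (wr_inv m k h) = vneg v" by (simp add: fv wr_inv_def)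
  ultimately have "snd (\<phi> (wr_inv m k h)) = mu (vneg v)" using snd_phi by (metis prod.collapse)
  then have "snd g1 = vadd (vadd v (snd g2)) (mu (vneg v))"
    using e fv by (cases g2, cases "\<phi> (wr_inv m k h)") (simp add: wr_mult_Pair)
  then have "snd g1 = vadd (vadd (snd h) (snd g2)) (vneg (mu (snd h)))"
    using fv MU.map_vneg lv by simp
  then show ?thesis using that h e by blast
qed

lemma infinite_classes_if_det_zero:
  assumes D: "det MU.id_minus_mat_L = 0"
  shows "infinite (reidemeister_classes W \<phi>)"
proof -
  obtain r where r: "length r = k" "r \<noteq> vzero k" "\<And>v. length v = k \<Longrightarrow> vdot r (vsub v (mu v)) = 0"
    using MU.det_zero_imp_annihilator[OF D] by blast
  obtain i where i: "i < k" "r ! i \<noteq> 0"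
  proof (rule ccontr)
    assume "\<not> thesis"
    then have "r = vzero k" using r(1) that by (intro nth_equalityI) auto
    then show False using r(2) by simp
  qed
  define b where "b t = ((\<lambda>x::int list. 0::int), vsmul (int t) (vbasis k i))" for t :: nat
  have b: "b t \<in> carrier W" for t unfolding b_def using translation_closed by simp
  show ?thesis
  proof (rule infinite_reidemeister_classesI[OF group_W phi_hom b])
    fix s t :: nat assume st: "s \<noteq> t"
    show "\<not> twisted_conj W \<phi> (b s) (b t)"
    proof
      assume "twisted_conj W \<phi> (b s) (b t)"
      moreover have "b s \<in> wr_carrier m k" "b t \<in> wr_carrier m k" using b by simp_all
      ultimately obtain h where h: "h \<in> wr_carrier m k"
        and e: "snd (b s) = vadd (vadd (snd h) (snd (b t))) (vneg (mu (snd h)))"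
        by (metis twisted_conj_snd)
      define v where "v = snd h"
      have lv: "length v = k" using h by (cases h) (simp add: v_def mem_wr_carrier)
      have "vdot r (snd (b s)) = vdot r (snd (b t)) + vdot r (vsub v (mu v))"
        using e lv length_mu[OF lv] r(1)
        by (simp add: b_def v_def vdot_vadd vdot_vneg vdot_vsub)
      then have "int s * r ! i = int t * r ! i"
        using r(3)[OF lv] vdot_vsmul_vbasis[OF r(1) i(1)] by (simp add: b_def)
      then show False using i(2) st by simp
    qed
  qed
qed

end

section \<open>Units of \<open>\<bbbF>\<^sub>p[\<int>\<^sup>k]\<close> are monomials\<close>

text \<open>Functions \<open>\<int>\<^sup>k \<rightarrow> \<int>\<close> are read modulo \<open>p\<close> as elements of the group ring \<open>\<bbbF>\<^sub>p[\<int>\<^sup>k]\<close>; the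
  hypothesis \<open>product\<close> below says that \<open>a\<close>, transported along \<open>M\<close>, times \<open>b\<close> is \<open>1\<close>.  For every
  translation invariant order the leading monomials of the factors multiply to the leading monomial
  \<open>0\<close> of the product.\<close>

lemma sum_mod_single:
  fixes p :: int
  assumes "finite S" "y\<^sub>1 \<in> S" "\<And>y. y \<in> S - {y\<^sub>1} \<Longrightarrow> p dvd t y"
  shows "(\<Sum>y\<in>S. t y) mod p = t y\<^sub>1 mod p"
proof -
  have "(\<Sum>y\<in>S. t y) = t y\<^sub>1 + (\<Sum>y\<in>S - {y\<^sub>1}. t y)" using assms by (simp add: sum.remove)
  moreover have "p dvd (\<Sum>y\<in>S - {y\<^sub>1}. t y)" using assms by (intro dvd_sum) auto
  ultimately show ?thesis by (metis add.right_neutral dvd_imp_mod_0 mod_add_right_eq)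
qed

lemma leading_terms_cancel:
  fixes p :: int and less :: "int list \<Rightarrow> int list \<Rightarrow> bool"
  assumes p: "prime p" and S: "finite S"
    and trans: "\<And>a b c. less a b \<Longrightarrow> less b c \<Longrightarrow> less a c" and irrefl: "\<And>a. \<not> less a a"
    and translate: "\<And>a b c. length a = k \<Longrightarrow> length b = k \<Longrightarrow> length c = k \<Longrightarrow>
        less a b \<Longrightarrow> less (vadd a c) (vadd b c)"
    and M: "\<And>y. y \<in> S \<Longrightarrow> length (M y) = k"
    and product: "\<And>z. length z = k \<Longrightarrow>
        (\<Sum>y\<in>S. a y * b (vsub z (M y))) mod p = (if z = vzero k then 1 else 0) mod p"
    and y\<^sub>1: "y\<^sub>1 \<in> S" "\<not> p dvd a y\<^sub>1" "\<And>y. y \<in> S \<Longrightarrow> \<not> p dvd a y \<Longrightarrow> y \<noteq> y\<^sub>1 \<Longrightarrow> less (M y) (M y\<^sub>1)"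
    and u: "length u = k" "\<not> p dvd b u" "\<And>x. length x = k \<Longrightarrow> \<not> p dvd b x \<Longrightarrow> x \<noteq> u \<Longrightarrow> less x u"
  shows "vadd (M y\<^sub>1) u = vzero k"
proof -
  define z where "z = vadd (M y\<^sub>1) u"
  have lz: "length z = k" using M[OF y\<^sub>1(1)] u(1) by (simp add: z_def)
  have "(\<Sum>y\<in>S. a y * b (vsub z (M y))) mod p = (a y\<^sub>1 * b (vsub z (M y\<^sub>1))) mod p"
  proof (rule sum_mod_single[OF S y\<^sub>1(1)])
    fix y assume y: "y \<in> S - {y\<^sub>1}"
    show "p dvd a y * b (vsub z (M y))"
    proof (cases "p dvd a y")
      case False
      define x where "x = vsub z (M y)"
      have lx: "length x = k" using lz M y by (simp add: x_def)
      have "p dvd b x"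
      proof (rule ccontr)
        assume "\<not> p dvd b x"
        then have "x = u \<or> less x u" using u(3) lx by blast
        moreover have "less (vadd (M y) x) (vadd (M y\<^sub>1) x)"
          using translate y\<^sub>1(3) y False M y\<^sub>1(1) lx by simp
        ultimately have "less (vadd (M y) x) z"
          using translate[of x u "M y\<^sub>1"] trans M y\<^sub>1(1) lx u(1) by (auto simp: z_def vadd_commute)
        moreover have "vadd (M y) x = z" using lz M[of y] y unfolding x_def by (subst vadd_commute) simp
        ultimately show False using irrefl by simp
      qed
      then show ?thesis by (simp add: x_def)
    qed simp
  qed
  moreover have "vsub z (M y\<^sub>1) = u" using M[OF y\<^sub>1(1)] u(1) by (simp add: z_def vadd_commute)
  moreover have "\<not> p dvd a y\<^sub>1 * b u" using y\<^sub>1(2) u(2) p by (simp add: prime_dvd_mult_iff)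
  ultimately have "(if z = vzero k then 1 else 0) mod p \<noteq> 0"
    using product[OF lz] by (simp add: dvd_eq_mod_eq_0)
  then show ?thesis by (auto simp: z_def split: if_splits)
qed

lemma lex_extreme_terms_cancel:
  fixes p :: int and k :: nat and S :: "int list set" and a b :: "int list \<Rightarrow> int"
    and M :: "int list \<Rightarrow> int list"
  defines "Y \<equiv> {y \<in> S. \<not> p dvd a y}" and "U \<equiv> {x. length x = k \<and> \<not> p dvd b x}"
  assumes p: "prime p" and S: "finite S" and U: "finite U" and nonempty: "Y \<noteq> {}" "U \<noteq> {}"
    and M: "inj_on M S" "\<And>y. y \<in> S \<Longrightarrow> length (M y) = k"
    and product: "\<And>z. length z = k \<Longrightarrow>
        (\<Sum>y\<in>S. a y * b (vsub z (M y))) mod p = (if z = vzero k then 1 else 0) mod p"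
  shows "vadd (Max (M ` Y)) (Max U) = vzero k" "vadd (Min (M ` Y)) (Min U) = vzero k"
proof -
  have Y: "finite Y" using S by (simp add: Y_def)
  have "Max (M ` Y) \<in> M ` Y" "Min (M ` Y) \<in> M ` Y" using Y nonempty by simp_all
  then obtain y\<^sub>1 y\<^sub>2 where y: "y\<^sub>1 \<in> Y" "M y\<^sub>1 = Max (M ` Y)" "y\<^sub>2 \<in> Y" "M y\<^sub>2 = Min (M ` Y)"
    by (metis imageE)
  have U_ext: "Max U \<in> U" "Min U \<in> U" using U nonempty by simp_all
  have M_ne: "M y \<noteq> M y'" if "y \<in> Y" "y' \<in> Y" "y \<noteq> y'" for y y'
    using that M(1) by (auto simp: Y_def inj_on_def)
  have "vadd (M y\<^sub>1) (Max U) = vzero k"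
  proof (rule leading_terms_cancel[OF p S _ _ _ M(2) product, where less = "(<)"])
    show "y\<^sub>1 \<in> S" "\<not> p dvd a y\<^sub>1" using y by (auto simp: Y_def)
    show "M y < M y\<^sub>1" if "y \<in> S" "\<not> p dvd a y" "y \<noteq> y\<^sub>1" for y
    proof -
      have "y \<in> Y" using that by (simp add: Y_def)
      then show ?thesis using Y y(1,2) M_ne[of y y\<^sub>1] that(3) by (simp add: order_less_le)
    qed
    show "length (Max U) = k" "\<not> p dvd b (Max U)" using U_ext by (auto simp: U_def)
    show "x < Max U" if "length x = k" "\<not> p dvd b x" "x \<noteq> Max U" for x
      using that U by (auto simp: U_def order_less_le)
  qed (auto intro: vadd_less_vadd_lex)
  then show "vadd (Max (M ` Y)) (Max U) = vzero k" using y(2) by simp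
  have "vadd (M y\<^sub>2) (Min U) = vzero k"
  proof (rule leading_terms_cancel[OF p S _ _ _ M(2) product, where less = "(>)"])
    show "y\<^sub>2 \<in> S" "\<not> p dvd a y\<^sub>2" using y by (auto simp: Y_def)
    show "M y > M y\<^sub>2" if "y \<in> S" "\<not> p dvd a y" "y \<noteq> y\<^sub>2" for y
    proof -
      have "y \<in> Y" using that by (simp add: Y_def)
      then show ?thesis using Y y(3,4) M_ne[of y y\<^sub>2] that(3) by (simp add: order_less_le)
    qed
    show "length (Min U) = k" "\<not> p dvd b (Min U)" using U_ext by (auto simp: U_def)
    show "x > Min U" if "length x = k" "\<not> p dvd b x" "x \<noteq> Min U" for x
      using that U by (auto simp: U_def order_less_le)
  qed (auto intro: vadd_less_vadd_lex)
  then show "vadd (Min (M ` Y)) (Min U) = vzero k" using y(4) by simp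
qed

text \<open>The lexicographically largest and smallest monomials of \<open>b\<close> are both the inverses of those of the
  first factor, which forces \<open>b\<close> to have only one monomial.\<close>

lemma unit_mod_prime_is_monomial:
  fixes p :: int
  assumes p: "prime p" and S: "finite S" "S \<subseteq> Zvec k"
    and M: "inj_on M S" "\<And>y. y \<in> S \<Longrightarrow> length (M y) = k"
    and b: "finite {x. b x \<noteq> 0}"
    and product: "\<And>z. length z = k \<Longrightarrow>
        (\<Sum>y\<in>S. a y * b (vsub z (M y))) mod p = (if z = vzero k then 1 else 0) mod p"
  shows "\<exists>w. length w = k \<and> (\<forall>x. length x = k \<longrightarrow> (p dvd b x \<longleftrightarrow> x \<noteq> w))"
proof -
  define Y where "Y = {y \<in> S. \<not> p dvd a y}"
  define U where "U = {x. length x = k \<and> \<not> p dvd b x}"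
  have Y: "finite Y" using S by (simp add: Y_def)
  have U: "finite U" by (rule finite_subset[OF _ b]) (auto simp: U_def)
  have not_dvd: "\<not> p dvd (\<Sum>y\<in>S. a y * b (vsub (vzero k) (M y)))"
    using product[of "vzero k"] p by (simp add: dvd_eq_mod_eq_0 prime_int_iff)
  have "Y \<noteq> {}"
    using not_dvd by (auto simp: Y_def intro: dvd_sum)
  moreover have "U \<noteq> {}"
  proof
    assume "U = {}"
    then have "p dvd a y * b (vsub (vzero k) (M y))" if "y \<in> S" for y
      using that M(2) by (auto simp: U_def)
    then show False using not_dvd by (auto intro: dvd_sum)
  qed
  ultimately have cancel: "vadd (Max (M ` Y)) (Max U) = vzero k" "vadd (Min (M ` Y)) (Min U) = vzero k"
    using lex_extreme_terms_cancel[OF p S(1) _ _ _ M product] U by (simp_all add: Y_def U_def)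
  have U_ext: "Max U \<in> U" "Min U \<in> U" using U \<open>U \<noteq> {}\<close> by simp_all
  have "Max (M ` Y) \<in> M ` Y" "Min (M ` Y) \<in> M ` Y" using Y \<open>Y \<noteq> {}\<close> by simp_all
  then have lengths: "length (Max (M ` Y)) = k" "length (Min (M ` Y)) = k"
    using M(2) by (auto simp: Y_def)
  have "Min (M ` Y) \<le> Max (M ` Y)" using Y \<open>Y \<noteq> {}\<close> by simp
  then have "\<not> Min U < Max U"
    using cancel lengths U_ext
      vadd_le_vadd_lex[of "Min (M ` Y)" "Max (M ` Y)" "Min U"] vadd_less_vadd_lex[of "Min U" "Max U" "Max (M ` Y)"]
    by (auto simp: vadd_commute U_def)
  then have U_single: "x = Max U" if "x \<in> U" for x
  proof -
    have "Min U \<le> x" "x \<le> Max U" using that U by simp_all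
    moreover from this have "Min U = Max U" using \<open>\<not> Min U < Max U\<close> by simp
    ultimately show ?thesis by simp
  qed
  have "length (Max U) = k" "\<not> p dvd b (Max U)" using U_ext(1) by (simp_all add: U_def)
  moreover have "p dvd b x" if "length x = k" "x \<noteq> Max U" for x
    using that U_single[of x] by (auto simp: U_def)
  ultimately show ?thesis by blast
qed

section \<open>Automorphisms modulo a prime divisor of \<open>m\<close>\<close>

lemma dvd_mod_add_right: "(p::int) dvd m \<Longrightarrow> (a + b mod m) mod p = (a + b) mod p"
  by (metis mod_add_right_eq mod_mod_cancel)

lemma dvd_mod_diff_self: "(p::int) dvd m \<Longrightarrow> p dvd (a mod m - a)"
  by (meson dvd_trans mod_eq_dvd_iff mod_mod_trivial)

lemma shift_delta: "length y = k \<Longrightarrow> shift k y (delta (vzero k)) = delta y"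
  by (auto simp: shift_def delta_def fun_eq_iff) (metis vsub_eq_vzero_iff)

locale wreath_aut_mod_prime = wreath_aut +
  fixes p :: int
  assumes prime_p: "prime p" and p_dvd_m: "p dvd int m"
begin

lemma delta_closed: "length y = k \<Longrightarrow> (delta y, vzero k) \<in> wr_carrier m k"
proof -
  have "1 < p" "p \<le> int m" using prime_p p_dvd_m m_pos by (simp_all add: prime_int_iff zdvd_imp_le)
  then show "length y = k \<Longrightarrow> ?thesis" by (auto simp: mem_wr_carrier delta_def)
qed

definition u0 :: "int list \<Rightarrow> int" where "u0 = psi (delta (vzero k))"

lemma u0_closed: "(u0, vzero k) \<in> wr_carrier m k"
  unfolding u0_def using psi_closed[OF delta_closed] by simp

lemma psi_delta: "length y = k \<Longrightarrow> psi (delta y) = shift k (mu y) u0"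
  using psi_shift[OF delta_closed, of "vzero k" y] shift_delta u0_def by simp

lemma psi_zero: "psi (\<lambda>x. 0) = (\<lambda>x. 0)"
  using phi_base[of "\<lambda>x. 0"] phi_one m_pos by (simp add: mem_wr_carrier)

lemma psi_mod_p_delta_expansion:
  assumes "finite S" "(f, vzero k) \<in> wr_carrier m k" "{x. f x \<noteq> 0} = S" "length z = k"
  shows "psi f z mod p = (\<Sum>y\<in>S. f y * psi (delta y) z) mod p"
  using assms
proof (induction S arbitrary: f rule: finite_induct)
  case empty
  then have "f = (\<lambda>x. 0)" by auto
  then show ?case using psi_zero by simp
next
  case (insert y S)
  have f: "\<forall>x. 0 \<le> f x \<and> f x < int m" "\<forall>x. length x \<noteq> k \<longrightarrow> f x = 0"
    using insert.prems(1) by (auto simp: mem_wr_carrier)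
  have ly: "length y = k" using f insert.prems(2) by auto
  define f' where "f' = f(y := 0)"
  have f'_closed: "(f', vzero k) \<in> wr_carrier m k"
  proof -
    have "{x. f' x \<noteq> 0} \<subseteq> {x. f x \<noteq> 0}" by (auto simp: f'_def)
    then have "finite {x. f' x \<noteq> 0}" using insert by (metis finite_insert finite_subset)
    then show ?thesis using insert.prems(1) m_pos by (auto simp: mem_wr_carrier f'_def)
  qed
  have "{x. f' x \<noteq> 0} = S" using insert.prems(2) insert.hyps(2) by (auto simp: f'_def)
  then have IH: "psi f' z mod p = (\<Sum>y\<in>S. f' y * psi (delta y) z) mod p"
    using insert.IH[OF f'_closed _ insert.prems(3)] by blast
  have "f = base_add m k f' (base_scale m k (int (nat (f y))) (delta y))"
    using f ly by (auto simp: base_add_def base_scale_def f'_def delta_def fun_eq_iff)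
  moreover have "(base_scale m k (int (nat (f y))) (delta y), vzero k) \<in> wr_carrier m k"
    using wr_pow_base[OF m_pos delta_closed[OF ly]] delta_closed[OF ly]
      monoid.nat_pow_closed[OF group.is_monoid[OF group_W]] by (metis wreath_simps(1))
  ultimately have "psi f = base_add m k (psi f') (base_scale m k (int (nat (f y))) (psi (delta y)))"
    using psi_base_add[OF f'_closed] psi_base_scale[OF delta_closed[OF ly]] by metis
  then have "psi f z mod p = (psi f' z + (f y * psi (delta y) z) mod int m) mod p"
    using insert.prems(3) f by (simp add: base_add_def base_scale_def mod_mod_cancel[OF p_dvd_m])
  also have "\<dots> = (psi f' z mod p + f y * psi (delta y) z) mod p"
    by (simp add: dvd_mod_add_right[OF p_dvd_m] mod_add_left_eq)
  also have "(\<Sum>y\<in>S. f' y * psi (delta y) z) = (\<Sum>y\<in>S. f y * psi (delta y) z)"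
    using insert.hyps(2) by (intro sum.cong) (auto simp: f'_def)
  then have "(psi f' z mod p + f y * psi (delta y) z) mod p = (\<Sum>y\<in>insert y S. f y * psi (delta y) z) mod p"
    using IH insert.hyps by (simp add: mod_add_left_eq mod_add_right_eq add.commute)
  finally show ?case .
qed

text \<open>Modulo \<open>p\<close>, \<open>\<psi>\<close> is the linear map \<open>\<delta>\<^sub>y \<mapsto> \<delta>\<^sub>\<mu>\<^sub>y * u\<^sub>0\<close>.\<close>

lemma psi_mod_p_expansion:
  assumes f: "(f, vzero k) \<in> wr_carrier m k" and lz: "length z = k"
  shows "psi f z mod p = (\<Sum>y\<in>{x. f x \<noteq> 0}. f y * u0 (vsub z (mu y))) mod p"
proof -
  have "psi f z mod p = (\<Sum>y\<in>{x. f x \<noteq> 0}. f y * psi (delta y) z) mod p"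
    using psi_mod_p_delta_expansion f lz by (simp add: mem_wr_carrier)
  also have "(\<Sum>y\<in>{x. f x \<noteq> 0}. f y * psi (delta y) z) = (\<Sum>y\<in>{x. f x \<noteq> 0}. f y * u0 (vsub z (mu y)))"
  proof (rule sum.cong)
    fix y assume "y \<in> {x. f x \<noteq> 0}"
    then have "length y = k" using f by (auto simp: mem_wr_carrier)
    then show "f y * psi (delta y) z = f y * u0 (vsub z (mu y))"
      using psi_delta lz by (simp add: shift_def)
  qed simp
  finally show ?thesis .
qed

text \<open>\<open>\<psi>\<close> is invertible, so \<open>u\<^sub>0\<close> is a unit of \<open>\<bbbF>\<^sub>p[\<int>\<^sup>k]\<close>.\<close>

lemma u0_monomial: "\<exists>w. length w = k \<and> (\<forall>x. length x = k \<longrightarrow> (p dvd u0 x \<longleftrightarrow> x \<noteq> w))"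
proof -
  interpret I: wreath_aut m k "inv_into (wr_carrier m k) \<phi>" by (rule wreath_aut_inverse)
  define u' where "u' = I.psi (delta (vzero k))"
  have u': "(u', vzero k) \<in> wr_carrier m k"
    unfolding u'_def using I.psi_closed[OF delta_closed] by simp
  have "inv_into (wr_carrier m k) \<phi> (delta (vzero k), vzero k) = (u', vzero k)"
    unfolding u'_def using I.phi_base[OF delta_closed] by simp
  moreover have "(delta (vzero k), vzero k) \<in> \<phi> ` wr_carrier m k" using phi_surj delta_closed by simp
  ultimately have "\<phi> (u', vzero k) = (delta (vzero k), vzero k)" by (metis f_inv_into_f)
  then have "psi u' = delta (vzero k)" using phi_base[OF u'] by simp
  then have "(\<Sum>y\<in>{x. u' x \<noteq> 0}. u' y * u0 (vsub z (mu y))) mod p = (if z = vzero k then 1 else 0) mod p"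
    if "length z = k" for z
    using psi_mod_p_expansion[OF u' that] by (simp add: delta_def)
  moreover have "finite {x. u' x \<noteq> 0}" "{x. u' x \<noteq> 0} \<subseteq> Zvec k" using u' by (auto simp: mem_wr_carrier)
  moreover have "inj_on mu {x. u' x \<noteq> 0}" using mu_inj \<open>{x. u' x \<noteq> 0} \<subseteq> Zvec k\<close> inj_on_subset by blast
  moreover have "finite {x. u0 x \<noteq> 0}" using u0_closed by (simp add: mem_wr_carrier)
  ultimately show ?thesis
    using unit_mod_prime_is_monomial[OF prime_p, of "{x. u' x \<noteq> 0}" k mu u0 u'] length_mu by blast
qed

definition w0 :: "int list" where
  "w0 = (SOME w. length w = k \<and> (\<forall>x. length x = k \<longrightarrow> (p dvd u0 x \<longleftrightarrow> x \<noteq> w)))"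

lemma w0: "length w0 = k" "\<And>x. length x = k \<Longrightarrow> p dvd u0 x \<longleftrightarrow> x \<noteq> w0"
  using someI_ex[OF u0_monomial] unfolding w0_def by blast+

definition eps :: int where "eps = u0 w0"

lemma eps_not_dvd: "\<not> p dvd eps"
  using w0 by (simp add: eps_def)

definition Aff :: "int list \<Rightarrow> int list" where "Aff x = vadd (mu x) w0"

lemma bij_Aff: "bij_betw Aff (Zvec k) (Zvec k)"
proof (rule bij_betw_imageI)
  show "inj_on Aff (Zvec k)"
  proof (rule inj_onI)
    fix x y assume x: "x \<in> Zvec k" and y: "y \<in> Zvec k" and e: "Aff x = Aff y"
    have "mu x = vsub (Aff x) w0" "mu y = vsub (Aff y) w0" using x y length_mu w0 by (simp_all add: Aff_def)
    then show "x = y" using e mu_inj x y by (auto simp: inj_on_def)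
  qed
  show "Aff ` Zvec k = Zvec k"
  proof
    show "Aff ` Zvec k \<subseteq> Zvec k" using length_mu w0 by (auto simp: Aff_def)
    show "Zvec k \<subseteq> Aff ` Zvec k"
    proof
      fix z assume z: "z \<in> Zvec k"
      then obtain x where "x \<in> Zvec k" "mu x = vsub z w0" using mu_surj w0 by (metis (mono_tags) imageE length_vsub mem_Collect_eq min.idem)
      then show "z \<in> Aff ` Zvec k" using z w0 by (auto simp: Aff_def intro!: image_eqI[of _ _ x])
    qed
  qed
qed

end

sublocale wreath_aut_mod_prime \<subseteq> AF: bijection_on "Zvec k" Aff
  by unfold_locales (rule bij_Aff)

context wreath_aut_mod_prime
begin

lemma vsub_Aff_mu_eq_w0_iff:
  assumes lx: "length x = k" and ly: "length y = k"
  shows "vsub (Aff x) (mu y) = w0 \<longleftrightarrow> x = y"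
proof
  assume e: "vsub (Aff x) (mu y) = w0"
  have "mu x = mu y"
    using e lx ly length_mu w0 by (auto simp: Aff_def list_eq_iff_nth_eq)
  then show "x = y" using mu_inj lx ly by (auto simp: inj_on_def)
next
  assume "x = y"
  then show "vsub (Aff x) (mu y) = w0" using ly length_mu w0 by (simp add: Aff_def vadd_commute[of "mu y"])
qed

text \<open>Since \<open>u\<^sub>0 \<equiv> \<epsilon> \<delta>\<^sub>w\<^sub>0 (mod p)\<close>, modulo \<open>p\<close> the map \<open>\<psi>\<close> moves the coefficient at \<open>x\<close> to \<open>Aff x\<close> and
  multiplies it by \<open>\<epsilon>\<close>.\<close>

lemma psi_Aff:
  assumes f: "(f, vzero k) \<in> wr_carrier m k" and lx: "length x = k"
  shows "psi f (Aff x) mod p = (eps * f x) mod p"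
proof -
  have fin: "finite {y. f y \<noteq> 0}" using f by (simp add: mem_wr_carrier)
  have lA: "length (Aff x) = k" using AF.A_in lx by simp
  have other: "p dvd f y * u0 (vsub (Aff x) (mu y))" if y: "f y \<noteq> 0" "y \<noteq> x" for y
  proof -
    have ly: "length y = k" using f y(1) by (auto simp: mem_wr_carrier)
    then have "vsub (Aff x) (mu y) \<noteq> w0" using vsub_Aff_mu_eq_w0_iff[OF lx] y(2) by simp
    moreover have "length (vsub (Aff x) (mu y)) = k" using lA ly length_mu by simp
    ultimately show ?thesis using w0(2) by simp
  qed
  have expansion: "psi f (Aff x) mod p = (\<Sum>y\<in>{x. f x \<noteq> 0}. f y * u0 (vsub (Aff x) (mu y))) mod p"
    by (rule psi_mod_p_expansion[OF f lA])
  show ?thesis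
  proof (cases "f x = 0")
    case True
    have "p dvd (\<Sum>y\<in>{x. f x \<noteq> 0}. f y * u0 (vsub (Aff x) (mu y)))"
      by (rule dvd_sum) (use other True in auto)
    then show ?thesis using expansion True by simp
  next
    case False
    have "(\<Sum>y\<in>{x. f x \<noteq> 0}. f y * u0 (vsub (Aff x) (mu y))) mod p = (f x * u0 (vsub (Aff x) (mu x))) mod p"
      by (rule sum_mod_single[OF fin]) (use other False in auto)
    then show ?thesis using expansion vsub_Aff_mu_eq_w0_iff[OF lx lx] by (simp add: eps_def mult.commute)
  qed
qed

end

section \<open>An invariant of twisted conjugacy in the base group\<close>

definition char_sum :: "(int list \<Rightarrow> int) \<Rightarrow> (int list \<Rightarrow> int) \<Rightarrow> int" where
  "char_sum \<chi> f = (\<Sum>y\<in>{y. f y \<noteq> 0}. \<chi> y * f y)"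

lemma char_sum_superset:
  assumes "finite T" "{y. f y \<noteq> 0} \<subseteq> T"
  shows "char_sum \<chi> f = (\<Sum>y\<in>T. \<chi> y * f y)"
  unfolding char_sum_def using assms by (intro sum.mono_neutral_left) auto

lemma char_sum_delta: "char_sum \<chi> (delta x) = \<chi> x"
proof -
  have "{y. delta x y \<noteq> 0} = {x}" by (auto simp: delta_def)
  then show ?thesis by (simp add: char_sum_def delta_def)
qed

lemma dvd_sum_diff:
  fixes p :: int
  assumes "finite T" "\<And>y. y \<in> T \<Longrightarrow> p dvd (F y - G y)"
  shows "p dvd (sum F T - sum G T)"
  using assms by (simp add: dvd_sum flip: sum_subtractf)

lemma dvd_mult_diff_inverse_factors:
  fixes p a a' b b' s e :: int
  assumes "p dvd (a' - s * a)" "p dvd (b' - e * b)" "p dvd (e * s - 1)"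
  shows "p dvd (a' * b' - a * b)"
proof -
  have "a' * b' - a * b = (a' - s * a) * b' + s * a * (b' - e * b) + (e * s - 1) * a * b"
    by (simp add: algebra_simps)
  then show ?thesis using assms by (simp add: dvd_add dvd_mult dvd_mult2 mult.assoc)
qed

context wreath_aut_mod_prime
begin

lemma char_sum_base_add:
  assumes f: "(f, vzero k) \<in> wr_carrier m k" and g: "(g, vzero k) \<in> wr_carrier m k"
  shows "p dvd (char_sum \<chi> (base_add m k f g) - (char_sum \<chi> f + char_sum \<chi> g))"
proof -
  define h where "h = base_add m k f g"
  define T where "T = {y. f y \<noteq> 0} \<union> {y. g y \<noteq> 0} \<union> {y. h y \<noteq> 0}"
  have "(h, vzero k) \<in> wr_carrier m k" unfolding h_def by (rule base_add_closed[OF m_pos f g])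
  then have T: "finite T" using f g by (simp add: T_def mem_wr_carrier)
  have "char_sum \<chi> h = (\<Sum>y\<in>T. \<chi> y * h y)" "char_sum \<chi> f = (\<Sum>y\<in>T. \<chi> y * f y)"
    "char_sum \<chi> g = (\<Sum>y\<in>T. \<chi> y * g y)"
    by (rule char_sum_superset[OF T]; auto simp: T_def)+
  moreover have "p dvd ((\<Sum>y\<in>T. \<chi> y * h y) - (\<Sum>y\<in>T. \<chi> y * f y + \<chi> y * g y))"
  proof (rule dvd_sum_diff[OF T])
    fix y
    show "p dvd (\<chi> y * h y - (\<chi> y * f y + \<chi> y * g y))"
    proof (cases "length y = k")
      case True
      then have "h y - (f y + g y) = (f y + g y) mod int m - (f y + g y)" by (simp add: h_def base_add_def)
      then show ?thesis using dvd_mod_diff_self[OF p_dvd_m, of "f y + g y"]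
        by (metis dvd_mult right_diff_distrib distrib_left)
    next
      case False
      then show ?thesis using f g by (auto simp: h_def base_add_def mem_wr_carrier)
    qed
  qed
  ultimately show ?thesis by (simp add: h_def sum.distrib)
qed

lemma char_sum_base_neg:
  assumes g: "(g, vzero k) \<in> wr_carrier m k"
  shows "p dvd (char_sum \<chi> (base_neg m k g) + char_sum \<chi> g)"
proof -
  define h where "h = base_neg m k g"
  have "(h, vzero k) \<in> wr_carrier m k"
    using wr_inv_closed[OF m_pos g] by (simp add: h_def wr_inv_base)
  then have T: "finite ({y. g y \<noteq> 0} \<union> {y. h y \<noteq> 0})" using g by (simp add: mem_wr_carrier)
  have "char_sum \<chi> h = (\<Sum>y\<in>{y. g y \<noteq> 0} \<union> {y. h y \<noteq> 0}. \<chi> y * h y)"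
    "char_sum \<chi> g = (\<Sum>y\<in>{y. g y \<noteq> 0} \<union> {y. h y \<noteq> 0}. \<chi> y * g y)"
    by (rule char_sum_superset[OF T]; auto)+
  moreover have "p dvd ((\<Sum>y\<in>{y. g y \<noteq> 0} \<union> {y. h y \<noteq> 0}. \<chi> y * h y)
      - (\<Sum>y\<in>{y. g y \<noteq> 0} \<union> {y. h y \<noteq> 0}. - (\<chi> y * g y)))"
  proof (rule dvd_sum_diff[OF T])
    fix y
    show "p dvd (\<chi> y * h y - - (\<chi> y * g y))"
    proof (cases "length y = k")
      case True
      then have "\<chi> y * h y - - (\<chi> y * g y) = \<chi> y * ((- g y) mod int m - (- g y))"
        by (simp add: h_def base_neg_def algebra_simps)
      then show ?thesis using dvd_mod_diff_self[OF p_dvd_m, of "- g y"] by simp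
    next
      case False
      then show ?thesis using g by (auto simp: h_def base_neg_def mem_wr_carrier)
    qed
  qed
  ultimately show ?thesis by (simp add: h_def sum_negf)
qed

lemma char_sum_psi:
  assumes \<chi>: "\<And>y. length y = k \<Longrightarrow> p dvd (\<chi> (Aff y) - s * \<chi> y)"
    and eps_s: "p dvd (eps * s - 1)" and g: "(g, vzero k) \<in> wr_carrier m k"
  shows "p dvd (char_sum \<chi> (psi g) - char_sum \<chi> g)"
proof -
  define S where "S = {y. g y \<noteq> 0}"
  have psi_g: "(psi g, vzero k) \<in> wr_carrier m k" by (rule psi_closed[OF g])
  have S: "finite S" "S \<subseteq> Zvec k" using g by (auto simp: S_def mem_wr_carrier)
  define T where "T = {y. psi g y \<noteq> 0} \<union> Aff ` S"
  have T: "finite T" using S psi_g by (simp add: T_def mem_wr_carrier)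
  have "char_sum \<chi> (psi g) = (\<Sum>z\<in>T - Aff ` S. \<chi> z * psi g z) + (\<Sum>z\<in>Aff ` S. \<chi> z * psi g z)"
    using char_sum_superset[OF T, of "psi g"] sum.subset_diff[of "Aff ` S" T] T by (auto simp: T_def)
  moreover have "p dvd (\<Sum>z\<in>T - Aff ` S. \<chi> z * psi g z)"
  proof (rule dvd_sum)
    fix z assume z: "z \<in> T - Aff ` S"
    then have lz: "length z = k" using psi_g by (auto simp: T_def mem_wr_carrier)
    define x where "x = AF.Ainv z"
    have lx: "length x = k" and zx: "Aff x = z" using AF.Ainv_in AF.A_Ainv lz by (simp_all add: x_def)
    then have "g x = 0" using z by (auto simp: S_def)
    then have "p dvd psi g z" using psi_Aff[OF g lx] zx by (simp add: dvd_eq_mod_eq_0)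
    then show "p dvd \<chi> z * psi g z" by simp
  qed
  moreover have "(\<Sum>z\<in>Aff ` S. \<chi> z * psi g z) = (\<Sum>x\<in>S. \<chi> (Aff x) * psi g (Aff x))"
    using sum.reindex[OF inj_on_subset[OF bij_betw_imp_inj_on[OF bij_Aff] S(2)]] by simp
  moreover have "p dvd ((\<Sum>x\<in>S. \<chi> (Aff x) * psi g (Aff x)) - (\<Sum>x\<in>S. \<chi> x * g x))"
  proof (rule dvd_sum_diff[OF S(1)])
    fix x assume "x \<in> S"
    then have lx: "length x = k" using S by auto
    have "p dvd (psi g (Aff x) - eps * g x)" using psi_Aff[OF g lx] by (simp add: mod_eq_dvd_iff)
    then show "p dvd (\<chi> (Aff x) * psi g (Aff x) - \<chi> x * g x)"
      using dvd_mult_diff_inverse_factors[OF \<chi>[OF lx] _ eps_s] by blast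
  qed
  moreover have "char_sum \<chi> g = (\<Sum>x\<in>S. \<chi> x * g x)" by (simp add: char_sum_def S_def)
  ultimately show ?thesis by (metis (no_types, lifting) add_diff_eq dvd_add)
qed

text \<open>Without nonzero fixed points of \<open>\<mu>\<close> the conjugating element lies in the base group, and each
  of its three factors changes \<open>char_sum \<chi>\<close> only by a multiple of \<open>p\<close>.\<close>

lemma char_sum_twisted_conj:
  assumes D: "det MU.id_minus_mat_L \<noteq> 0"
    and f1: "(f1, vzero k) \<in> wr_carrier m k" and f2: "(f2, vzero k) \<in> wr_carrier m k"
    and tc: "twisted_conj W \<phi> (f1, vzero k) (f2, vzero k)"
    and \<chi>: "\<And>y. length y = k \<Longrightarrow> p dvd (\<chi> (Aff y) - s * \<chi> y)"
    and eps_s: "p dvd (eps * s - 1)"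
  shows "p dvd (char_sum \<chi> f1 - char_sum \<chi> f2)"
proof -
  obtain h where h: "h \<in> wr_carrier m k"
    and e: "(f1, vzero k) = wr_mult m k (wr_mult m k h (f2, vzero k)) (\<phi> (wr_inv m k h))"
    and v: "vzero k = vadd (vadd (snd h) (vzero k)) (vneg (mu (snd h)))"
    using twisted_conj_snd[OF f1 f2 tc] by (metis snd_conv)
  have lv: "length (snd h) = k" using h by (cases h) (simp add: mem_wr_carrier)
  have "mu (snd h) = snd h"
    using v lv length_mu[OF lv] by (auto simp: list_eq_iff_nth_eq)
  then have "snd h = vzero k" using MU.det_nonzero_imp_no_fixed_point[OF D lv] by simp
  then obtain g where hg: "h = (g, vzero k)" by (metis prod.collapse)
  have g: "(g, vzero k) \<in> wr_carrier m k" using h hg by simp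
  have gn: "(base_neg m k g, vzero k) \<in> wr_carrier m k"
    using wr_inv_closed[OF m_pos g] by (simp add: wr_inv_base)
  have f1_eq: "f1 = base_add m k (base_add m k g f2) (psi (base_neg m k g))"
    using e hg phi_base[OF gn] by (simp add: wr_inv_base wr_mult_base)
  have gf2: "(base_add m k g f2, vzero k) \<in> wr_carrier m k" by (rule base_add_closed[OF m_pos g f2])
  have "p dvd (char_sum \<chi> f1 - (char_sum \<chi> (base_add m k g f2) + char_sum \<chi> (psi (base_neg m k g))))"
    unfolding f1_eq by (rule char_sum_base_add[OF gf2 psi_closed[OF gn]])
  moreover have "p dvd (char_sum \<chi> (base_add m k g f2) - (char_sum \<chi> g + char_sum \<chi> f2))"
    by (rule char_sum_base_add[OF g f2])
  moreover have "p dvd (char_sum \<chi> (psi (base_neg m k g)) - char_sum \<chi> (base_neg m k g))"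
    by (rule char_sum_psi[where \<chi> = \<chi> and s = s, OF \<chi> eps_s gn])
  moreover have "p dvd (char_sum \<chi> (base_neg m k g) + char_sum \<chi> g)"
    by (rule char_sum_base_neg[OF g])
  ultimately have "p dvd ((char_sum \<chi> f1 - (char_sum \<chi> (base_add m k g f2) + char_sum \<chi> (psi (base_neg m k g))))
      + (char_sum \<chi> (base_add m k g f2) - (char_sum \<chi> g + char_sum \<chi> f2))
      + (char_sum \<chi> (psi (base_neg m k g)) - char_sum \<chi> (base_neg m k g))
      + (char_sum \<chi> (base_neg m k g) + char_sum \<chi> g))"
    by (rule dvd_add[OF dvd_add[OF dvd_add]])
  then show ?thesis by (simp add: algebra_simps)
qed

end

section \<open>Infinitely many Reidemeister classes\<close>

lemma unit_mod_2_or_3: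
  fixes e :: int
  assumes "p = 2 \<or> p = 3" and "\<not> p dvd e"
  shows "p dvd (e - 1) \<or> p = 3 \<and> p dvd (e + 1)"
  using assms by presburger

context wreath_aut_mod_prime
begin

definition Aff_step :: "int list \<Rightarrow> int list" where "Aff_step x = vsub (Aff x) x"

definition reachable_step :: "int list \<Rightarrow> int list" where
  "reachable_step a = vsub w0 (vsmul (det MU.id_minus_mat_L) a)"

lemma length_Aff_step: "length x = k \<Longrightarrow> length (Aff_step x) = k"
  using AF.A_in by (simp add: Aff_step_def)

lemma length_reachable_step: "length a = k \<Longrightarrow> length (reachable_step a) = k"
  using w0 by (simp add: reachable_step_def)

lemma Aff_step_Aff: "length x = k \<Longrightarrow> Aff_step (Aff x) = mu (Aff_step x)"
  using AF.A_in[of x] MU.map_vsub[of "Aff x" x] length_mu w0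
  by (simp add: Aff_step_def Aff_def list_eq_iff_nth_eq)

lemma Aff_step_funpow: "length x = k \<Longrightarrow> Aff_step ((Aff ^^ n) x) = (mu ^^ n) (Aff_step x)"
proof (induction n)
  case (Suc n)
  have "length ((Aff ^^ n) x) = k" using AF.funpow_A_in Suc.prems by simp
  then show ?case using Suc Aff_step_Aff by simp
qed simp

lemma vcontent_Aff_step_iter: "length x = k \<Longrightarrow> vcontent (Aff_step (AF.iter j x)) = vcontent (Aff_step x)"
  using AF.invariant_iter[of "\<lambda>y. vcontent (Aff_step y)" x j] Aff_step_Aff length_Aff_step
    MU.vcontent_map[OF mu_inj mu_surj] by simp

lemma Aff_step_reaches:
  assumes "length a = k"
  shows "\<exists>x. length x = k \<and> Aff_step x = reachable_step a"
proof -
  obtain x where x: "length x = k" "vsub x (mu x) = vsmul (det MU.id_minus_mat_L) a"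
    using MU.det_multiple_in_range[OF assms] by blast
  then have "Aff_step x = reachable_step a"
    using assms length_mu w0 by (auto simp: Aff_step_def Aff_def reachable_step_def list_eq_iff_nth_eq)
  then show ?thesis using x(1) by blast
qed

lemma vsmul_reachable_step:
  assumes "length a = k" and "D = det MU.id_minus_mat_L"
  shows "vsmul (1 + D * D * int t) (reachable_step a) = reachable_step (vsub a (vsmul (D * int t) (reachable_step a)))"
  using assms w0 by (auto simp: reachable_step_def list_eq_iff_nth_eq algebra_simps)

lemma Aff_orbits_distinct:
  assumes x1: "length x1 = k" "Aff_step x1 = vsmul c1 y" and x2: "length x2 = k" "Aff_step x2 = vsmul c2 y"
    and c: "0 < c1" "0 < c2" "c1 \<noteq> c2" and y: "length y = k" "y \<noteq> vzero k"
  shows "AF.iter j x1 \<noteq> x2"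
proof
  assume "AF.iter j x1 = x2"
  then have "c2 * vcontent y = c1 * vcontent y"
    using vcontent_Aff_step_iter[OF x1(1), of j] x1 x2 c by (simp add: vcontent_vsmul)
  moreover have "vcontent y \<noteq> 0" using y vcontent_eq_0_iff by simp
  ultimately show False using c by simp
qed

lemma Aff_orbit_even_periods:
  assumes x: "length x = k" "Aff_step x = vsmul c y" and c: "c \<noteq> 0" and y: "length y = k"
    and no_odd: "\<And>N. odd N \<Longrightarrow> (mu ^^ N) y \<noteq> y"
    and period: "AF.iter j x = x"
  shows "even j"
proof (rule ccontr)
  assume "odd j"
  then have odd: "odd (nat \<bar>j\<bar>)" by (simp add: even_nat_iff)
  interpret MN: additive_map k "mu ^^ nat \<bar>j\<bar>" by (rule MU.additive_map_funpow)
  have "(Aff ^^ nat \<bar>j\<bar>) x = x" using AF.iter_period_imp_funpow x(1) period by simp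
  then have "vsmul c ((mu ^^ nat \<bar>j\<bar>) y) = vsmul c y"
    using Aff_step_funpow[OF x(1), of "nat \<bar>j\<bar>"] x(2) MN.map_vsmul[OF y] by simp
  then have "(mu ^^ nat \<bar>j\<bar>) y = y" using vsmul_cancel[OF c] MN.length_map[OF y] y by simp
  then show False using no_odd odd by blast
qed

lemma reachable_step_nonzero:
  assumes D: "det MU.id_minus_mat_L \<noteq> 0" and k: "0 < k"
  shows "\<exists>a. length a = k \<and> reachable_step a \<noteq> vzero k"
proof (cases "w0 = vzero k")
  case False
  then have "reachable_step (vzero k) \<noteq> vzero k" using w0 by (simp add: reachable_step_def)
  then show ?thesis by (intro exI[of _ "vzero k"]) simp
next
  case True
  then have "reachable_step (vbasis k 0) ! 0 \<noteq> 0" using D k by (simp add: reachable_step_def nth_vbasis)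
  then show ?thesis using k by (intro exI[of _ "vbasis k 0"]) auto
qed

text \<open>If every reachable step had an odd period under \<open>\<mu>\<close>, a common odd period of the steps of \<open>0\<close>
  and of the unit vectors would be an odd period of \<open>\<mu>\<close> itself, impossible in odd dimension.\<close>

lemma reachable_step_no_odd_period:
  assumes D: "det MU.id_minus_mat_L \<noteq> 0" and odd_k: "odd k"
  shows "\<exists>a. length a = k \<and> (\<forall>N. odd N \<longrightarrow> (mu ^^ N) (reachable_step a) \<noteq> reachable_step a)"
proof (rule ccontr)
  assume "\<not> ?thesis"
  then have "\<forall>a. \<exists>N. length a = k \<longrightarrow> odd N \<and> (mu ^^ N) (reachable_step a) = reachable_step a"
    by blast
  then obtain Nf where Nf: "\<And>a. length a = k \<Longrightarrow> odd (Nf a) \<and> (mu ^^ Nf a) (reachable_step a) = reachable_step a"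
    by (metis choice)
  define N where "N = Nf (vzero k) * (\<Prod>i<k. Nf (vbasis k i))"
  have odd_N: "odd N" unfolding N_def using Nf by (simp add: even_prod_iff)
  interpret MN: additive_map k "mu ^^ N" by (rule MU.additive_map_funpow)
  have fixed: "(mu ^^ N) (reachable_step a) = reachable_step a" if a: "a = vzero k \<or> (\<exists>i<k. a = vbasis k i)" for a
  proof -
    have la: "length a = k" using a by auto
    have "Nf a dvd N"
    proof (cases "a = vzero k")
      case True
      then show ?thesis by (simp add: N_def)
    next
      case False
      then obtain i where "i < k" "a = vbasis k i" using a by auto
      then have "Nf a dvd (\<Prod>i<k. Nf (vbasis k i))" using dvd_prodI[of "{..<k}" i "\<lambda>i. Nf (vbasis k i)"] by simp
      then show ?thesis by (simp add: N_def)
    qed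
    then obtain c where c: "N = Nf a * c" by (auto simp: dvd_def)
    have "((mu ^^ Nf a) ^^ c) (reachable_step a) = reachable_step a"
      using Nf[OF la] by (induction c) auto
    then show ?thesis by (simp add: c funpow_mult)
  qed
  have basis_fixed: "(mu ^^ N) (vbasis k i) = vbasis k i" if i: "i < k" for i
  proof -
    have "vsub (reachable_step (vzero k)) (reachable_step (vbasis k i)) = vsmul (det MU.id_minus_mat_L) (vbasis k i)"
      using w0 by (auto simp: reachable_step_def list_eq_iff_nth_eq)
    moreover have "(mu ^^ N) (vsub (reachable_step (vzero k)) (reachable_step (vbasis k i)))
        = vsub (reachable_step (vzero k)) (reachable_step (vbasis k i))"
    proof -
      have "(mu ^^ N) (reachable_step (vbasis k i)) = reachable_step (vbasis k i)"
        "(mu ^^ N) (reachable_step (vzero k)) = reachable_step (vzero k)"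
        using fixed i by blast+
      then show ?thesis
        using MN.map_vsub[OF length_reachable_step length_reachable_step, of "vzero k" "vbasis k i"] by simp
    qed
    ultimately have "vsmul (det MU.id_minus_mat_L) ((mu ^^ N) (vbasis k i)) = vsmul (det MU.id_minus_mat_L) (vbasis k i)"
      using MN.map_vsmul[of "vbasis k i"] by simp
    then show ?thesis using vsmul_cancel[OF D] MN.length_map[of "vbasis k i"] by simp
  qed
  have "(mu ^^ N) v = v" if "length v = k" for v
    by (rule MN.map_eq_id_if_fixes_basis[OF basis_fixed that])
  then show False using MU.odd_period_imp_det_zero[OF odd_k odd_N] D by simp
qed

lemma eps_sign:
  assumes p: "p = 2 \<or> p = 3 \<and> odd k"
  obtains s where "s = 1 \<or> s = -1 \<and> odd k" "p dvd (eps * s - 1)"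
proof -
  have "p = 2 \<or> p = 3" using p by auto
  then have eps: "p dvd (eps - 1) \<or> p = 3 \<and> p dvd (eps + 1)" using unit_mod_2_or_3 eps_not_dvd by blast
  show ?thesis
  proof (cases "p dvd (eps - 1)")
    case True
    then show ?thesis using that[of 1] by simp
  next
    case False
    then have "p = 3" "p dvd (eps + 1)" using eps by auto
    moreover have "eps * (-1) - 1 = - (eps + 1)" by simp
    ultimately show ?thesis using that[of "-1"] p by (simp only: dvd_minus_iff) auto
  qed
qed

lemma good_reachable_step:
  fixes s :: int
  assumes D: "det MU.id_minus_mat_L \<noteq> 0" and k: "0 < k" and s: "s = 1 \<or> s = -1 \<and> odd k"
  obtains a where "length a = k" "reachable_step a \<noteq> vzero k"
    "s = 1 \<or> s = -1 \<and> (\<forall>N. odd N \<longrightarrow> (mu ^^ N) (reachable_step a) \<noteq> reachable_step a)"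
proof (cases "s = 1")
  case True
  obtain a where "length a = k" "reachable_step a \<noteq> vzero k" using reachable_step_nonzero[OF D k] by blast
  then show ?thesis using True that by blast
next
  case False
  then obtain a where a: "length a = k" "\<forall>N. odd N \<longrightarrow> (mu ^^ N) (reachable_step a) \<noteq> reachable_step a"
    using reachable_step_no_odd_period[OF D] s by blast
  have "reachable_step a \<noteq> vzero k"
  proof
    assume "reachable_step a = vzero k"
    then have "(mu ^^ 1) (reachable_step a) = reachable_step a" using MU.map_vzero by simp
    then show False using a(2)[rule_format, of 1] by simp
  qed
  then show ?thesis using a False s that by blast
qed

lemma Aff_orbit_representatives:
  fixes s :: int
  assumes D: "det MU.id_minus_mat_L \<noteq> 0" and a: "length a = k" "reachable_step a \<noteq> vzero k"
    and s: "s = 1 \<or> s = -1 \<and> (\<forall>N. odd N \<longrightarrow> (mu ^^ N) (reachable_step a) \<noteq> reachable_step a)"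
  obtains xs :: "nat \<Rightarrow> int list"
  where "\<And>t. length (xs t) = k" "\<And>t1 t2 j. t1 \<noteq> t2 \<Longrightarrow> AF.iter j (xs t1) \<noteq> xs t2"
    "\<And>t. s = 1 \<or> s = -1 \<and> (\<forall>j. AF.iter j (xs t) = xs t \<longrightarrow> even j)"
proof -
  define DD where "DD = det MU.id_minus_mat_L"
  define y where "y = reachable_step a"
  have y: "length y = k" "y \<noteq> vzero k" using a length_reachable_step by (simp_all add: y_def)
  define c where "c t = 1 + DD * DD * int t" for t :: nat
  have c: "0 < c t" for t
  proof -
    have "0 \<le> DD * DD * int t" by simp
    then show ?thesis unfolding c_def by linarith
  qed
  have c_inj: "c t1 \<noteq> c t2" if "t1 \<noteq> t2" for t1 t2 using that D by (simp add: c_def DD_def)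
  have "\<exists>x. length x = k \<and> Aff_step x = vsmul (c t) y" for t
    using Aff_step_reaches[of "vsub a (vsmul (DD * int t) y)"] vsmul_reachable_step[OF a(1) DD_def, of t] a(1) y(1)
    by (simp add: c_def y_def)
  then obtain xs where xs: "\<And>t. length (xs t) = k \<and> Aff_step (xs t) = vsmul (c t) y"
    using choice[of "\<lambda>t x. length x = k \<and> Aff_step x = vsmul (c t) y"] by blast
  then have xs: "\<And>t. length (xs t) = k" "\<And>t. Aff_step (xs t) = vsmul (c t) y" by simp_all
  show ?thesis
  proof (rule that[OF xs(1)])
    show "AF.iter j (xs t1) \<noteq> xs t2" if "t1 \<noteq> t2" for t1 t2 j
      by (rule Aff_orbits_distinct[OF xs(1) xs(2) xs(1) xs(2) c c c_inj[OF that] y])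
    show "s = 1 \<or> s = -1 \<and> (\<forall>j. AF.iter j (xs t) = xs t \<longrightarrow> even j)" for t
    proof (cases "s = 1")
      case False
      then have no_odd: "\<And>N. odd N \<Longrightarrow> (mu ^^ N) y \<noteq> y" and "s = -1" using s by (auto simp: y_def)
      moreover have "even j" if "AF.iter j (xs t) = xs t" for j
        using Aff_orbit_even_periods[OF xs(1)[of t] xs(2)[of t] _ y(1) no_odd that] c[of t] by simp
      ultimately show ?thesis by blast
    qed simp
  qed
qed

lemma delta_not_twisted_conj:
  assumes D: "det MU.id_minus_mat_L \<noteq> 0" and eps_s: "p dvd (eps * s - 1)"
    and x1: "length x1 = k" and sign: "s = 1 \<or> s = -1 \<and> (\<forall>j. AF.iter j x1 = x1 \<longrightarrow> even j)"
    and x2: "length x2 = k" "\<And>j. AF.iter j x1 \<noteq> x2"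
  shows "\<not> twisted_conj W \<phi> (delta x1, vzero k) (delta x2, vzero k)"
proof
  assume tc: "twisted_conj W \<phi> (delta x1, vzero k) (delta x2, vzero k)"
  define \<chi> where "\<chi> = AF.orbit_sign s x1"
  have x1': "x1 \<in> Zvec k" using x1 by simp
  have \<chi>_step: "p dvd (\<chi> (Aff z) - s * \<chi> z)" if "length z = k" for z
    using AF.orbit_sign_step[OF x1' sign] that by (simp add: \<chi>_def)
  have "p dvd (char_sum \<chi> (delta x1) - char_sum \<chi> (delta x2))"
    by (rule char_sum_twisted_conj[where \<chi> = \<chi> and s = s,
          OF D delta_closed[OF x1] delta_closed[OF x2(1)] tc \<chi>_step eps_s])
  moreover have "\<chi> x2 = 0" using x2(2) by (simp add: \<chi>_def AF.orbit_sign_def)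
  ultimately have "p dvd 1"
    using AF.orbit_sign_base[OF x1' sign] by (simp add: \<chi>_def char_sum_delta)
  then show False using prime_p by (simp add: prime_int_iff)
qed

lemma infinite_classes_if_det_nonzero:
  assumes D: "det MU.id_minus_mat_L \<noteq> 0" and k: "0 < k" and p: "p = 2 \<or> p = 3 \<and> odd k"
  shows "infinite (reidemeister_classes W \<phi>)"
proof -
  obtain s where s: "s = 1 \<or> s = -1 \<and> odd k" and eps_s: "p dvd (eps * s - 1)"
    by (rule eps_sign[OF p])
  obtain a where a: "length a = k" "reachable_step a \<noteq> vzero k"
    and s_a: "s = 1 \<or> s = -1 \<and> (\<forall>N. odd N \<longrightarrow> (mu ^^ N) (reachable_step a) \<noteq> reachable_step a)"
    using good_reachable_step[OF D k s] by blast
  obtain xs :: "nat \<Rightarrow> int list"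
    where xs: "\<And>t. length (xs t) = k" "\<And>t1 t2 j. t1 \<noteq> t2 \<Longrightarrow> AF.iter j (xs t1) \<noteq> xs t2"
    and sign: "\<And>t. s = 1 \<or> s = -1 \<and> (\<forall>j. AF.iter j (xs t) = xs t \<longrightarrow> even j)"
    using Aff_orbit_representatives[OF D a s_a] by blast
  show ?thesis
  proof (rule infinite_reidemeister_classesI[OF group_W phi_hom, of "\<lambda>t. (delta (xs t), vzero k)"])
    show "(delta (xs t), vzero k) \<in> carrier W" for t using delta_closed xs(1) by simp
    show "\<not> twisted_conj W \<phi> (delta (xs t1), vzero k) (delta (xs t2), vzero k)" if "t1 \<noteq> t2" for t1 t2
      by (rule delta_not_twisted_conj[OF D eps_s xs(1) sign xs(1) xs(2)[OF that]])
  qed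
qed

end

theorem R_infinity_wreath:
  fixes m k :: nat and p :: int
  assumes m: "0 < m" and k: "0 < k" and p: "prime p" "p dvd int m" and p_cases: "p = 2 \<or> p = 3 \<and> odd k"
  shows "R_infinity (wreath m k)"
  unfolding R_infinity_def
proof
  fix \<phi> assume "\<phi> \<in> iso (wreath m k) (wreath m k)"
  then interpret wreath_aut_mod_prime m k \<phi> p by unfold_locales (use m p in auto)
  show "infinite (reidemeister_classes (wreath m k) \<phi>)"
    using infinite_classes_if_det_zero infinite_classes_if_det_nonzero[OF _ k p_cases] by blast
qed

theorem corollary3p3:
  fixes n k :: nat
  assumes "n > 0" and "k > 0"
  shows "R_infinity (wreath (2 * n) k) \<and> R_infinity (wreath (3 * n) (2 * k + 1))"
proof
  show "R_infinity (wreath (2 * n) k)"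
    by (rule R_infinity_wreath[of "2 * n" k 2]) (use assms in auto)
  show "R_infinity (wreath (3 * n) (2 * k + 1))"
    by (rule R_infinity_wreath[of "3 * n" "2 * k + 1" 3]) (use assms in auto)
qed

end
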